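(* Let $K$ be a field, let $A$ be a finitely presented $K$-algebra, and let $I$ be a right ideal of $A$ that is finitely presented as a right $A$-module. If $AI=A$, then the subalgebra $K+I$ (where $K$ denotes $K\cdot 1_A$) is a finitely presented $K$-algebra.
   Context: A $K$-algebra (associative, with $1$) is finitely presented if it is isomorphic to the free associative $K$-algebra on finitely many generators modulo a two-sided ideal generated by finitely many elements. A right $A$-module $V$ is finitely presented if $V\cong F/U$ with $F$ a finitely generated free right $A$-module and $U$ a finitely generated submodule. $AI$ denotes the additive subgroup spanned by all products $ai$ with $a\in A$, $i\in I$. *)

theory Defs
  imports Main "HOL-Library.Poly_Mapping"
begin

definition k_algebra :: "('k::field \<Rightarrow> 'a::ring_1) \<Rightarrow> bool" where
  "k_algebra \<phi> \<longleftrightarrow> \<phi> 1 = 1 \<and> (\<forall>x y. \<phi> (x + y) = \<phi> x + \<phi> y)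
     \<and> (\<forall>x y. \<phi> (x * y) = \<phi> x * \<phi> y) \<and> (\<forall>c a. \<phi> c * a = a * \<phi> c)"

datatype word = Word (letters: "nat list")

instantiation word :: monoid_add
begin
definition zero_word :: word where "zero_word = Word []"
definition plus_word :: "word \<Rightarrow> word \<Rightarrow> word" where
  "plus_word u v = Word (letters u @ letters v)"
instance by standard (auto simp: zero_word_def plus_word_def)
end

text \<open>The free associative K-algebra (noncommutative polynomials) with
  multiplication the convolution over word concatenation.\<close>
type_synonym 'k free_alg = "word \<Rightarrow>\<^sub>0 'k"

definition free_alg_n :: "nat \<Rightarrow> 'k::field free_alg set" where
  "free_alg_n n = {p. \<forall>w \<in> Poly_Mapping.keys p. set (letters w) \<subseteq> {..<n}}"

definition fa_eval :: "('k::field \<Rightarrow> 'a::ring_1) \<Rightarrow> (nat \<Rightarrow> 'a) \<Rightarrow> 'k free_alg \<Rightarrow> 'a" where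
  "fa_eval \<phi> g p = (\<Sum>w \<in> Poly_Mapping.keys p. \<phi> (Poly_Mapping.lookup p w) * prod_list (map g (letters w)))"

definition fa_ideal_gen :: "nat \<Rightarrow> 'k::field free_alg set \<Rightarrow> 'k free_alg set" where
  "fa_ideal_gen n R = {(\<Sum>j<m. u j * r j * v j) | (m::nat) u r v.
       \<forall>j<m. u j \<in> free_alg_n n \<and> r j \<in> R \<and> v j \<in> free_alg_n n}"

definition fp_algebra :: "('k::field \<Rightarrow> 'a::ring_1) \<Rightarrow> 'a set \<Rightarrow> bool" where
  "fp_algebra \<phi> S \<longleftrightarrow> (\<exists>n g R. (\<forall>i<n. g i \<in> S) \<and> S = fa_eval \<phi> g ` free_alg_n n
      \<and> finite R \<and> R \<subseteq> free_alg_n n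
      \<and> {p \<in> free_alg_n n. fa_eval \<phi> g p = 0} = fa_ideal_gen n R)"

definition right_ideal :: "'a::ring_1 set \<Rightarrow> bool" where
  "right_ideal I \<longleftrightarrow> 0 \<in> I \<and> (\<forall>x\<in>I. \<forall>y\<in>I. x + y \<in> I) \<and> (\<forall>x\<in>I. - x \<in> I)
     \<and> (\<forall>x\<in>I. \<forall>a. x * a \<in> I)"

text \<open>A right ideal I is finitely presented as a right A-module: I = F/U with
  F = A^n free and U finitely generated; i.e. there is a surjective right module
  map A^n -> I, (a_i) |-> sum b_i a_i, whose kernel is a finitely generated right
  submodule of A^n. Elements of A^n are functions nat => A vanishing at i >= n.\<close>
definition fp_right_ideal :: "'a::ring_1 set \<Rightarrow> bool" where
  "fp_right_ideal I \<longleftrightarrow> (\<exists>n (b :: nat \<Rightarrow> 'a). (\<forall>i<n. b i \<in> I)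
     \<and> I = {(\<Sum>i<n. b i * a i) | a. True}
     \<and> (\<exists>(m::nat) (rel :: nat \<Rightarrow> nat \<Rightarrow> 'a). (\<forall>j<m. \<forall>i\<ge>n. rel j i = 0)
         \<and> {a. (\<forall>i\<ge>n. a i = 0) \<and> (\<Sum>i<n. b i * a i) = 0}
           = {(\<lambda>i. \<Sum>j<m. rel j i * c j) | c. True}))"

definition left_span :: "'a::ring_1 set \<Rightarrow> 'a set" where
  "left_span I = {(\<Sum>k<m. a k * x k) | (m::nat) a x. \<forall>k<m. x k \<in> I}"

end

theory Submission
  imports Defs
begin

text \<open>Write \<open>A = K\<langle>x\<^sub>0, \<dots>, x\<^sub>n\<^sub>-\<^sub>1\<rangle>/(R)\<close> and let \<open>b\<^sub>0, \<dots>, b\<^sub>m\<^sub>-\<^sub>1\<close>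
  generate \<open>I\<close> with finitely many generating syzygies. Since \<open>AI = A\<close>, after adjoining finitely
  many generators there are \<open>d\<^sub>l\<close> with \<open>\<Sum>\<^sub>l d\<^sub>l b\<^sub>l = 1\<close>; then
  \<open>p \<mapsto> (b\<^sub>i p d\<^sub>l)\<^sub>i\<^sub>,\<^sub>l\<close> is a ring homomorphism from \<open>A\<close> into
  \<open>m \<times> m\<close> matrices over \<open>K + I\<close>. Hence \<open>K + I\<close> is generated by the finitely many
  elements \<open>b\<^sub>i x\<^sub>j d\<^sub>l\<close>, \<open>b\<^sub>i d\<^sub>l\<close> and \<open>b\<^sub>l\<close>, and each of its elements has
  a normal form \<open>c + \<Sum>\<^sub>i b\<^sub>i a\<^sub>i\<close> (unique up to syzygies when \<open>1 \<notin> I\<close>).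
  Finitely many relations among the new generators (the images of \<open>R\<close> and of the syzygies
  under the homomorphism, and the rewrite rules for products of generators) make the normal
  form map a homomorphism modulo these relations, so they generate all relations.\<close>

section \<open>Free algebras and evaluation\<close>

lemma poly_mapping_expansion:
  "(p::'b::monoid_add \<Rightarrow>\<^sub>0 'c::comm_monoid_add)
     = (\<Sum>w\<in>Poly_Mapping.keys p. Poly_Mapping.single w (Poly_Mapping.lookup p w))"
proof (rule poly_mapping_eqI)
  fix v
  have "Poly_Mapping.lookup (\<Sum>w\<in>Poly_Mapping.keys p. Poly_Mapping.single w (Poly_Mapping.lookup p w)) v
      = (\<Sum>w\<in>Poly_Mapping.keys p. if w = v then Poly_Mapping.lookup p w else 0)"
    by (simp add: lookup_sum lookup_single when_def)
  also have "\<dots> = Poly_Mapping.lookup p v"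
    by (simp add: sum.delta' in_keys_iff)
  finally show "Poly_Mapping.lookup p v
      = Poly_Mapping.lookup (\<Sum>w\<in>Poly_Mapping.keys p. Poly_Mapping.single w (Poly_Mapping.lookup p w)) v"
    by simp
qed

lemma poly_mapping_induct [case_names zero single add]:
  fixes p :: "'b::monoid_add \<Rightarrow>\<^sub>0 'c::comm_monoid_add"
  assumes "P 0"
    and "\<And>w c. w \<in> Poly_Mapping.keys p \<Longrightarrow> P (Poly_Mapping.single w c)"
    and "\<And>a b. P a \<Longrightarrow> P b \<Longrightarrow> P (a + b)"
  shows "P p"
proof -
  have "P (\<Sum>w\<in>S. Poly_Mapping.single w (Poly_Mapping.lookup p w))" if "S \<subseteq> Poly_Mapping.keys p" for S
    using finite_subset[OF that finite_keys] that
    by (induction S rule: finite_induct) (auto intro: assms)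
  from this[OF order_refl] show ?thesis
    by (simp only: poly_mapping_expansion[symmetric])
qed

lemma letters_plus [simp]: "letters (u + v) = letters u @ letters v"
  by (simp add: plus_word_def)

lemma letters_zero [simp]: "letters 0 = []"
  by (simp add: zero_word_def)

definition fa_var :: "nat \<Rightarrow> 'k::field free_alg" where
  "fa_var t = Poly_Mapping.single (Word [t]) 1"

abbreviation fa_const :: "'k::field \<Rightarrow> 'k free_alg" where
  "fa_const c \<equiv> Poly_Mapping.single 0 c"

lemma fa_const_commute: "(x::'k::field free_alg) * fa_const c = fa_const c * x"
  by (induction x rule: poly_mapping_induct)
    (simp_all add: mult_single mult.commute distrib_left distrib_right)

lemma fa_const_mult: "fa_const a * fa_const b = fa_const (a * b)"
  by (simp add: mult_single)

lemma fa_single_Cons: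
  "Poly_Mapping.single (Word (t # w)) (1::'k::field) = fa_var t * Poly_Mapping.single (Word w) 1"
  by (simp add: fa_var_def mult_single plus_word_def)

lemma fa_single_eq_const_mult:
  "Poly_Mapping.single w c = fa_const c * Poly_Mapping.single w (1::'k::field)"
  by (simp add: mult_single)

lemma free_alg_n_zero [simp, intro]: "0 \<in> free_alg_n n"
  by (simp add: free_alg_n_def)

lemma free_alg_n_single [intro]:
  "set (letters w) \<subseteq> {..<n} \<Longrightarrow> Poly_Mapping.single w c \<in> free_alg_n n"
  by (simp add: free_alg_n_def)

lemma free_alg_n_const [simp, intro]: "fa_const c \<in> free_alg_n n"
  by (simp add: free_alg_n_def)

lemma free_alg_n_one [simp, intro]: "1 \<in> free_alg_n n"
  by (simp add: free_alg_n_def)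

lemma free_alg_n_var [intro]: "t < n \<Longrightarrow> fa_var t \<in> free_alg_n n"
  by (simp add: free_alg_n_def fa_var_def)

lemma free_alg_n_add [intro]: "p \<in> free_alg_n n \<Longrightarrow> q \<in> free_alg_n n \<Longrightarrow> p + q \<in> free_alg_n n"
  using keys_add[of p q] by (auto simp: free_alg_n_def)

lemma free_alg_n_uminus [intro]: "p \<in> free_alg_n n \<Longrightarrow> - p \<in> free_alg_n n"
  by (simp add: free_alg_n_def)

lemma free_alg_n_diff [intro]: "p \<in> free_alg_n n \<Longrightarrow> q \<in> free_alg_n n \<Longrightarrow> p - q \<in> free_alg_n n"
  using free_alg_n_add[of p n "- q"] by auto

lemma free_alg_n_mult [intro]: "p \<in> free_alg_n n \<Longrightarrow> q \<in> free_alg_n n \<Longrightarrow> p * q \<in> free_alg_n n"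
  using keys_mult[of p q] unfolding free_alg_n_def by fastforce

lemma free_alg_n_sum [intro]: "(\<And>i. i \<in> S \<Longrightarrow> f i \<in> free_alg_n n) \<Longrightarrow> sum f S \<in> free_alg_n n"
  by (induction S rule: infinite_finite_induct) auto

lemma free_alg_n_keys: "p \<in> free_alg_n n \<Longrightarrow> w \<in> Poly_Mapping.keys p \<Longrightarrow> set (letters w) \<subseteq> {..<n}"
  by (simp add: free_alg_n_def)

lemma free_alg_n_induct [consumes 1, case_names zero single add]:
  assumes "p \<in> free_alg_n n" and "P 0"
    and "\<And>w c. set (letters w) \<subseteq> {..<n} \<Longrightarrow> P (Poly_Mapping.single w c)"
    and "\<And>a b. a \<in> free_alg_n n \<Longrightarrow> b \<in> free_alg_n n \<Longrightarrow> P a \<Longrightarrow> P b \<Longrightarrow> P (a + b)"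
  shows "P p"
proof -
  have "p \<in> free_alg_n n \<and> P p"
  proof (induction p rule: poly_mapping_induct)
    case (single w c)
    then have "set (letters w) \<subseteq> {..<n}"
      using assms(1) free_alg_n_keys by blast
    then show ?case
      using assms(3) by blast
  qed (use assms in blast)+
  then show ?thesis ..
qed

context
  fixes \<phi> :: "'k::field \<Rightarrow> 'a::ring_1"
  assumes \<phi>: "k_algebra \<phi>"
begin

lemma k_algebra_add: "\<phi> (x + y) = \<phi> x + \<phi> y"
  using \<phi> unfolding k_algebra_def by blast

lemma k_algebra_mult: "\<phi> (x * y) = \<phi> x * \<phi> y"
  using \<phi> unfolding k_algebra_def by blast

lemma k_algebra_one: "\<phi> 1 = 1"
  using \<phi> unfolding k_algebra_def by blast

lemma k_algebra_commute: "\<phi> c * a = a * \<phi> c"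
  using \<phi> unfolding k_algebra_def by blast

lemma k_algebra_zero: "\<phi> 0 = 0"
  using k_algebra_add[of 0 0] by (metis add_cancel_right_right add_0)

lemma k_algebra_diff: "\<phi> (x - y) = \<phi> x - \<phi> y"
  using k_algebra_add[of "x - y" y] by (simp add: eq_diff_eq)

lemma fa_eval_single: "fa_eval \<phi> g (Poly_Mapping.single w c) = \<phi> c * prod_list (map g (letters w))"
  by (simp add: fa_eval_def k_algebra_zero)

lemma fa_eval_zero [simp]: "fa_eval \<phi> g 0 = 0"
  by (simp add: fa_eval_def)

lemma fa_eval_add: "fa_eval \<phi> g (p + q) = fa_eval \<phi> g p + fa_eval \<phi> g q"
  unfolding fa_eval_def
  by (rule setsum_keys_plus_distrib) (simp_all add: k_algebra_zero k_algebra_add distrib_right)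

lemma fa_eval_diff: "fa_eval \<phi> g (p - q) = fa_eval \<phi> g p - fa_eval \<phi> g q"
  using fa_eval_add[of g "p - q" q] by (simp add: eq_diff_eq)

lemma fa_eval_sum: "fa_eval \<phi> g (sum f S) = (\<Sum>i\<in>S. fa_eval \<phi> g (f i))"
  by (induction S rule: infinite_finite_induct) (auto simp: fa_eval_add)

lemma fa_eval_const: "fa_eval \<phi> g (fa_const c) = \<phi> c"
  by (simp add: fa_eval_single)

lemma fa_eval_one: "fa_eval \<phi> g 1 = 1"
  using fa_eval_const[of g 1] by (simp add: k_algebra_one)

lemma fa_eval_var: "fa_eval \<phi> g (fa_var t) = g t"
  by (simp add: fa_var_def fa_eval_single k_algebra_one)

lemma fa_eval_mult: "fa_eval \<phi> g (p * q) = fa_eval \<phi> g p * fa_eval \<phi> g q"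
proof (induction p rule: poly_mapping_induct)
  case (single u c)
  show ?case
  proof (induction q rule: poly_mapping_induct)
    case (single v c')
    let ?u = "prod_list (map g (letters u))" and ?v = "prod_list (map g (letters v))"
    have "\<phi> c * \<phi> c' * (?u * ?v) = \<phi> c * (\<phi> c' * ?u) * ?v"
      by (simp only: mult.assoc)
    also have "\<dots> = \<phi> c * (?u * \<phi> c') * ?v"
      by (simp only: k_algebra_commute[of c'])
    also have "\<dots> = \<phi> c * ?u * (\<phi> c' * ?v)"
      by (simp only: mult.assoc)
    finally show ?case
      by (simp add: mult_single fa_eval_single k_algebra_mult)
  qed (simp_all add: distrib_left fa_eval_add)
qed (simp_all add: distrib_right fa_eval_add)

end

section \<open>Generated ideals and congruence\<close>

lemma sum_lessThan_add: "(\<Sum>l<m + (k::nat). f l) = (\<Sum>l<m. f l) + (\<Sum>l<k. f (m + l))"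
  by (induction k) (simp_all add: add_ac)

lemma mem_fa_ideal_gen_iff:
  "a \<in> fa_ideal_gen n R \<longleftrightarrow> (\<exists>(m::nat) u r v. a = (\<Sum>j<m. u j * r j * v j)
     \<and> (\<forall>j<m. u j \<in> free_alg_n n \<and> r j \<in> R \<and> v j \<in> free_alg_n n))"
  unfolding fa_ideal_gen_def by blast

lemma fa_ideal_gen_zero [simp, intro]: "0 \<in> fa_ideal_gen n R"
  unfolding fa_ideal_gen_def by (rule CollectI, rule exI[of _ "0::nat"]) auto

lemma fa_ideal_gen_add:
  assumes "a \<in> fa_ideal_gen n R" and "b \<in> fa_ideal_gen n R"
  shows "a + b \<in> fa_ideal_gen n R"
proof -
  obtain m1 :: nat and u1 r1 v1 where a: "a = (\<Sum>j<m1. u1 j * r1 j * v1 j)"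
    and h1: "\<forall>j<m1. u1 j \<in> free_alg_n n \<and> r1 j \<in> R \<and> v1 j \<in> free_alg_n n"
    using assms(1) unfolding mem_fa_ideal_gen_iff by blast
  obtain m2 :: nat and u2 r2 v2 where b: "b = (\<Sum>j<m2. u2 j * r2 j * v2 j)"
    and h2: "\<forall>j<m2. u2 j \<in> free_alg_n n \<and> r2 j \<in> R \<and> v2 j \<in> free_alg_n n"
    using assms(2) unfolding mem_fa_ideal_gen_iff by blast
  define join where "join f1 f2 j = (if j < m1 then f1 j else f2 (j - m1))"
    for f1 f2 :: "nat \<Rightarrow> 'a free_alg" and j
  have "a + b = (\<Sum>j<m1 + m2. join u1 u2 j * join r1 r2 j * join v1 v2 j)"
    unfolding sum_lessThan_add a b by (simp add: join_def)
  moreover have "\<forall>j<m1 + m2. join u1 u2 j \<in> free_alg_n n \<and> join r1 r2 j \<in> R \<and> join v1 v2 j \<in> free_alg_n n"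
    using h1 h2 by (simp add: join_def)
  ultimately show ?thesis
    unfolding mem_fa_ideal_gen_iff by blast
qed

lemma fa_ideal_gen_generator: "r \<in> R \<Longrightarrow> r \<in> fa_ideal_gen n R"
  unfolding mem_fa_ideal_gen_iff
  by (intro exI[of _ "1::nat"] exI[of _ "\<lambda>_. 1"] exI[of _ "\<lambda>_. r"] exI[of _ "\<lambda>_. 1"]) simp

lemma fa_ideal_gen_mult_left:
  assumes "a \<in> fa_ideal_gen n R" and "x \<in> free_alg_n n"
  shows "x * a \<in> fa_ideal_gen n R"
proof -
  obtain m :: nat and u r v where a: "a = (\<Sum>j<m. u j * r j * v j)"
    and h: "\<forall>j<m. u j \<in> free_alg_n n \<and> r j \<in> R \<and> v j \<in> free_alg_n n"
    using assms(1) unfolding mem_fa_ideal_gen_iff by blast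
  have "x * a = (\<Sum>j<m. (x * u j) * r j * v j)"
    by (simp add: a sum_distrib_left mult.assoc)
  moreover have "\<forall>j<m. x * u j \<in> free_alg_n n \<and> r j \<in> R \<and> v j \<in> free_alg_n n"
    using h assms(2) by (simp add: free_alg_n_mult)
  ultimately show ?thesis
    unfolding mem_fa_ideal_gen_iff
    by (intro exI[of _ m] exI[of _ "\<lambda>j. x * u j"] exI[of _ r] exI[of _ v] conjI)
qed

lemma fa_ideal_gen_mult_right:
  assumes "a \<in> fa_ideal_gen n R" and "x \<in> free_alg_n n"
  shows "a * x \<in> fa_ideal_gen n R"
proof -
  obtain m :: nat and u r v where a: "a = (\<Sum>j<m. u j * r j * v j)"
    and h: "\<forall>j<m. u j \<in> free_alg_n n \<and> r j \<in> R \<and> v j \<in> free_alg_n n"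
    using assms(1) unfolding mem_fa_ideal_gen_iff by blast
  have "a * x = (\<Sum>j<m. u j * r j * (v j * x))"
    by (simp add: a sum_distrib_right mult.assoc)
  moreover have "\<forall>j<m. u j \<in> free_alg_n n \<and> r j \<in> R \<and> v j * x \<in> free_alg_n n"
    using h assms(2) by (simp add: free_alg_n_mult)
  ultimately show ?thesis
    unfolding mem_fa_ideal_gen_iff
    by (intro exI[of _ m] exI[of _ u] exI[of _ r] exI[of _ "\<lambda>j. v j * x"] conjI)
qed

lemma fa_ideal_gen_diff:
  "a \<in> fa_ideal_gen n R \<Longrightarrow> b \<in> fa_ideal_gen n R \<Longrightarrow> a - b \<in> fa_ideal_gen n R"
  using fa_ideal_gen_add[of a n R "- 1 * b"] fa_ideal_gen_mult_left[of b n R "- 1"] by auto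

lemma fa_ideal_gen_subset: "R \<subseteq> free_alg_n n \<Longrightarrow> fa_ideal_gen n R \<subseteq> free_alg_n n"
  unfolding fa_ideal_gen_def by (auto intro!: free_alg_n_sum free_alg_n_mult)

lemma fa_eval_fa_ideal_gen:
  assumes "k_algebra \<phi>" and "\<forall>r\<in>R. fa_eval \<phi> g r = 0" and "x \<in> fa_ideal_gen n R"
  shows "fa_eval \<phi> g x = 0"
  using assms unfolding fa_ideal_gen_def by (auto simp: fa_eval_sum fa_eval_mult)

definition fa_cong :: "nat \<Rightarrow> 'k::field free_alg set \<Rightarrow> 'k free_alg \<Rightarrow> 'k free_alg \<Rightarrow> bool" where
  "fa_cong n R p q \<longleftrightarrow> p \<in> free_alg_n n \<and> q \<in> free_alg_n n \<and> p - q \<in> fa_ideal_gen n R"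

lemma fa_cong_refl: "p \<in> free_alg_n n \<Longrightarrow> fa_cong n R p p"
  by (simp add: fa_cong_def)

lemma fa_cong_sym: "fa_cong n R p q \<Longrightarrow> fa_cong n R q p"
  unfolding fa_cong_def using fa_ideal_gen_diff[of 0 n R "p - q"] by simp

lemma fa_cong_trans: "fa_cong n R p q \<Longrightarrow> fa_cong n R q r \<Longrightarrow> fa_cong n R p r"
  unfolding fa_cong_def using fa_ideal_gen_add[of "p - q" n R "q - r"] by simp

lemma fa_cong_add: "fa_cong n R p q \<Longrightarrow> fa_cong n R p' q' \<Longrightarrow> fa_cong n R (p + p') (q + q')"
  unfolding fa_cong_def using fa_ideal_gen_add[of "p - q" n R "p' - q'"]
    by (auto simp: algebra_simps)

lemma fa_cong_mult:
  assumes "fa_cong n R p q" and "fa_cong n R p' q'"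
  shows "fa_cong n R (p * p') (q * q')"
proof -
  have "p * p' - q * q' = (p - q) * p' + q * (p' - q')"
    by (simp add: algebra_simps)
  then show ?thesis
    using assms unfolding fa_cong_def
    by (auto intro: fa_ideal_gen_add fa_ideal_gen_mult_left fa_ideal_gen_mult_right)
qed

lemma fa_cong_sum:
  "(\<And>i. i \<in> S \<Longrightarrow> fa_cong n R (f i) (g i)) \<Longrightarrow> fa_cong n R (sum f S) (sum g S)"
  by (induction S rule: infinite_finite_induct) (auto simp: fa_cong_refl fa_cong_add)

lemma fa_cong_generator:
  "a - b \<in> R \<Longrightarrow> a \<in> free_alg_n n \<Longrightarrow> b \<in> free_alg_n n \<Longrightarrow> fa_cong n R a b"
  by (simp add: fa_cong_def fa_ideal_gen_generator)

section \<open>Presentations from a section of the evaluation map\<close>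

text \<open>To show that finitely many relations \<open>R\<close> present the subalgebra \<open>B\<close>, it suffices
  to find a map back from \<open>B\<close> into the free algebra that is a homomorphism modulo \<open>R\<close>
  and fixes the generators modulo \<open>R\<close>: then every polynomial is congruent to the image
  of its value, so polynomials with value \<open>0\<close> are congruent to the image of \<open>0\<close>.\<close>

context
  fixes \<phi> :: "'k::field \<Rightarrow> 'a::ring_1" and B :: "'a set" and g :: "nat \<Rightarrow> 'a"
    and N :: nat and R :: "'k free_alg set" and s :: "'a \<Rightarrow> 'k free_alg"
  assumes \<phi>: "k_algebra \<phi>"
    and gens: "\<And>t. t < N \<Longrightarrow> g t \<in> B"
    and add_closed: "\<And>x y. x \<in> B \<Longrightarrow> y \<in> B \<Longrightarrow> x + y \<in> B"
    and mult_closed: "\<And>x y. x \<in> B \<Longrightarrow> y \<in> B \<Longrightarrow> x * y \<in> B"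
    and const_in: "\<And>c. \<phi> c \<in> B"
    and s_add: "\<And>x y. x \<in> B \<Longrightarrow> y \<in> B \<Longrightarrow> fa_cong N R (s (x + y)) (s x + s y)"
    and s_mult: "\<And>x y. x \<in> B \<Longrightarrow> y \<in> B \<Longrightarrow> fa_cong N R (s (x * y)) (s x * s y)"
    and s_const: "\<And>c. fa_cong N R (s (\<phi> c)) (fa_const c)"
    and s_gens: "\<And>t. t < N \<Longrightarrow> fa_cong N R (s (g t)) (fa_var t)"
begin

lemma fa_eval_word_section:
  assumes "set w \<subseteq> {..<N}"
  shows "prod_list (map g w) \<in> B \<and> fa_cong N R (s (prod_list (map g w))) (Poly_Mapping.single (Word w) 1)"
  using assms
proof (induction w)
  case Nil
  then show ?case
    using const_in[of 1] s_const[of 1] by (simp add: k_algebra_one[OF \<phi>] zero_word_def)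
next
  case (Cons t w)
  then have "t < N" and "prod_list (map g w) \<in> B"
    and "fa_cong N R (s (prod_list (map g w))) (Poly_Mapping.single (Word w) 1)"
    by auto
  then show ?case
    using fa_cong_trans[OF s_mult fa_cong_mult[OF s_gens]]
    by (simp add: fa_single_Cons gens mult_closed)
qed

lemma fa_eval_section:
  assumes "p \<in> free_alg_n N"
  shows "fa_eval \<phi> g p \<in> B \<and> fa_cong N R (s (fa_eval \<phi> g p)) p"
  using assms
proof (induction p rule: free_alg_n_induct)
  case zero
  then show ?case
    using const_in[of 0] s_const[of 0] by (simp add: k_algebra_zero[OF \<phi>] fa_eval_zero[OF \<phi>])
next
  case (single w c)
  let ?w = "prod_list (map g (letters w))"
  have word: "?w \<in> B" "fa_cong N R (s ?w) (Poly_Mapping.single w 1)"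
    using fa_eval_word_section[OF single] by auto
  have "fa_cong N R (s (\<phi> c * ?w)) (fa_const c * Poly_Mapping.single w 1)"
    using fa_cong_trans[OF s_mult[OF const_in word(1)] fa_cong_mult[OF s_const word(2)]] .
  then have "fa_cong N R (s (\<phi> c * ?w)) (Poly_Mapping.single w c)"
    by (simp add: fa_single_eq_const_mult[of w c])
  then show ?case
    using mult_closed[OF const_in word(1)] by (simp add: fa_eval_single[OF \<phi>])
next
  case (add a b)
  then show ?case
    using fa_cong_trans[OF s_add fa_cong_add] by (simp add: fa_eval_add[OF \<phi>] add_closed)
qed

theorem fp_algebra_by_section:
  assumes "finite R" and "R \<subseteq> free_alg_n N"
    and R_vanish: "\<And>r. r \<in> R \<Longrightarrow> fa_eval \<phi> g r = 0"
    and s_inverse: "\<And>y. y \<in> B \<Longrightarrow> fa_eval \<phi> g (s y) = y"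
  shows "fp_algebra \<phi> B"
  unfolding fp_algebra_def
proof (intro exI conjI)
  show "\<forall>t<N. g t \<in> B"
    using gens by blast
  show "B = fa_eval \<phi> g ` free_alg_n N"
  proof
    show "B \<subseteq> fa_eval \<phi> g ` free_alg_n N"
    proof
      fix y assume "y \<in> B"
      then have "fa_cong N R (s (\<phi> 1 * y)) (s (\<phi> 1) * s y)"
        using s_mult const_in by blast
      then have "s y \<in> free_alg_n N"
        by (simp add: fa_cong_def k_algebra_one[OF \<phi>])
      then show "y \<in> fa_eval \<phi> g ` free_alg_n N"
        using s_inverse[OF \<open>y \<in> B\<close>] by (metis image_eqI)
    qed
    show "fa_eval \<phi> g ` free_alg_n N \<subseteq> B"
      using fa_eval_section by blast
  qed
  show "{p \<in> free_alg_n N. fa_eval \<phi> g p = 0} = fa_ideal_gen N R"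
  proof
    show "fa_ideal_gen N R \<subseteq> {p \<in> free_alg_n N. fa_eval \<phi> g p = 0}"
      using fa_eval_fa_ideal_gen[OF \<phi>] R_vanish fa_ideal_gen_subset[OF assms(2)] by blast
    show "{p \<in> free_alg_n N. fa_eval \<phi> g p = 0} \<subseteq> fa_ideal_gen N R"
    proof clarify
      fix p assume "p \<in> free_alg_n N" and "fa_eval \<phi> g p = 0"
      then have "fa_cong N R p 0"
        using fa_eval_section[of p] s_const[of 0]
        by (auto simp: k_algebra_zero[OF \<phi>] intro: fa_cong_trans fa_cong_sym)
      then show "p \<in> fa_ideal_gen N R"
        by (simp add: fa_cong_def)
    qed
  qed
qed (use assms in auto)

end

section \<open>Presentations of right ideals\<close>

definition right_ideal_presentation ::
    "'a::ring_1 set \<Rightarrow> nat \<Rightarrow> (nat \<Rightarrow> 'a) \<Rightarrow> nat \<Rightarrow> (nat \<Rightarrow> nat \<Rightarrow> 'a) \<Rightarrow> bool" where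
  "right_ideal_presentation I m b k rel \<longleftrightarrow> I = {(\<Sum>i<m. b i * a i) | a. True}
     \<and> (\<forall>j<k. (\<Sum>i<m. b i * rel j i) = 0)
     \<and> (\<forall>a. (\<Sum>i<m. b i * a i) = 0 \<longrightarrow> (\<exists>c. \<forall>i<m. a i = (\<Sum>j<k. rel j i * c j)))"

lemma fp_right_ideal_presentation:
  assumes "fp_right_ideal I"
  obtains m b k rel where "right_ideal_presentation I m b k rel"
proof -
  obtain m k :: nat and b rel where span: "I = {(\<Sum>i<m. b i * a i) | a. True}"
    and syz: "{a. (\<forall>i\<ge>m. a i = 0) \<and> (\<Sum>i<m. b i * a i) = 0} = {(\<lambda>i. \<Sum>j<k. rel j i * c j) | c. True}"
    using assms unfolding fp_right_ideal_def by blast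
  have "(\<Sum>i<m. b i * rel j i) = 0" if "j < k" for j
  proof -
    have "rel j \<in> {(\<lambda>i. \<Sum>j<k. rel j i * c j) | c. True}"
      by (rule CollectI, rule exI[of _ "\<lambda>j'. if j' = j then 1 else 0"])
        (use that in \<open>simp add: if_distrib sum.delta' cong: if_cong\<close>)
    then have "rel j \<in> {a. (\<forall>i\<ge>m. a i = 0) \<and> (\<Sum>i<m. b i * a i) = 0}"
      by (simp only: syz)
    then show ?thesis
      by simp
  qed
  moreover have "\<exists>c. \<forall>i<m. a i = (\<Sum>j<k. rel j i * c j)" if "(\<Sum>i<m. b i * a i) = 0" for a
  proof -
    have "(\<lambda>i. if i < m then a i else 0) \<in> {a. (\<forall>i\<ge>m. a i = 0) \<and> (\<Sum>i<m. b i * a i) = 0}"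
      using that by simp
    then obtain c where c: "(\<lambda>i. if i < m then a i else 0) = (\<lambda>i. \<Sum>j<k. rel j i * c j)"
      using syz by blast
    have "a i = (\<Sum>j<k. rel j i * c j)" if "i < m" for i
      using fun_cong[OF c, of i] that by simp
    then show ?thesis
      by blast
  qed
  ultimately show ?thesis
    using span by (intro that[of m b k rel]) (simp add: right_ideal_presentation_def)
qed

lemma right_ideal_presentation_generator:
  assumes "right_ideal_presentation I m b k rel" and "i < m"
  shows "b i \<in> I"
proof -
  have "b i \<in> {(\<Sum>i<m. b i * a i) | a. True}"
    by (rule CollectI, rule exI[of _ "\<lambda>i'. if i' = i then 1 else 0"])
      (use assms(2) in \<open>simp add: if_distrib sum.delta' cong: if_cong\<close>)
  then show ?thesis
    using assms(1) unfolding right_ideal_presentation_def by blast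
qed

text \<open>Adjoining elements \<open>x l = \<Sum>i<m. b i * c l i\<close> of \<open>I\<close> as further generators
  \<open>b m, \<dots>, b (m + M - 1)\<close>; the syzygy \<open>c l - e\<^sub>m\<^sub>+\<^sub>l\<close> is adjoined for each of them.\<close>

definition extend_gens :: "nat \<Rightarrow> (nat \<Rightarrow> 'a) \<Rightarrow> (nat \<Rightarrow> 'a) \<Rightarrow> nat \<Rightarrow> 'a" where
  "extend_gens m b x i = (if i < m then b i else x (i - m))"

definition extend_syzygies ::
    "nat \<Rightarrow> nat \<Rightarrow> (nat \<Rightarrow> nat \<Rightarrow> 'a::ring_1) \<Rightarrow> (nat \<Rightarrow> nat \<Rightarrow> 'a) \<Rightarrow> nat \<Rightarrow> nat \<Rightarrow> 'a" where
  "extend_syzygies m k rel c j i =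
     (if j < k then (if i < m then rel j i else 0)
      else if i < m then c (j - k) i else if i = m + (j - k) then - 1 else 0)"

lemma sum_extend_gens:
  fixes b x :: "nat \<Rightarrow> 'a::ring_1"
  assumes "\<forall>l<M. x l = (\<Sum>i<m. b i * c l i)"
  shows "(\<Sum>i<m + M. extend_gens m b x i * a i) = (\<Sum>i<m. b i * (a i + (\<Sum>l<M. c l i * a (m + l))))"
proof -
  have "(\<Sum>l<M. x l * a (m + l)) = (\<Sum>l<M. \<Sum>i<m. b i * (c l i * a (m + l)))"
    using assms by (intro sum.cong) (simp_all add: sum_distrib_right mult.assoc)
  also have "\<dots> = (\<Sum>i<m. b i * (\<Sum>l<M. c l i * a (m + l)))"
    by (subst sum.swap) (simp add: sum_distrib_left)
  finally show ?thesis
    by (simp add: sum_lessThan_add extend_gens_def distrib_left sum.distrib)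
qed

context
  fixes I :: "'a::ring_1 set" and m k M :: nat and b x :: "nat \<Rightarrow> 'a" and rel c :: "nat \<Rightarrow> nat \<Rightarrow> 'a"
  assumes pres: "right_ideal_presentation I m b k rel"
    and x: "\<forall>l<M. x l = (\<Sum>i<m. b i * c l i)"
begin

lemma extend_gens_span: "I = {(\<Sum>i<m + M. extend_gens m b x i * a i) | a. True}"
proof -
  have span: "I = {(\<Sum>i<m. b i * a i) | a. True}"
    using pres by (simp add: right_ideal_presentation_def)
  show ?thesis
  proof (intro set_eqI iffI)
    fix y assume "y \<in> I"
    then obtain a where "y = (\<Sum>i<m. b i * a i)"
      using span by blast
    then show "y \<in> {(\<Sum>i<m + M. extend_gens m b x i * a i) | a. True}"
      by (intro CollectI exI[of _ "\<lambda>i. if i < m then a i else 0"]) (simp add: sum_extend_gens[OF x])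
  next
    fix y assume "y \<in> {(\<Sum>i<m + M. extend_gens m b x i * a i) | a. True}"
    then show "y \<in> I"
      using span by (auto simp: sum_extend_gens[OF x])
  qed
qed

lemma extend_syzygies_vanish:
  assumes "j < k + M"
  shows "(\<Sum>i<m + M. extend_gens m b x i * extend_syzygies m k rel c j i) = 0"
proof (cases "j < k")
  case True
  then show ?thesis
    using pres by (simp add: sum_extend_gens[OF x] extend_syzygies_def right_ideal_presentation_def)
next
  case False
  define l0 where "l0 = j - k"
  have j: "j = k + l0" and "l0 < M"
    using False assms by (simp_all add: l0_def)
  then have "(\<Sum>l<M. c l i * extend_syzygies m k rel c j (m + l)) = - c l0 i" for i
    by (simp add: extend_syzygies_def if_distrib sum.delta' cong: if_cong)
  then show ?thesis
    by (simp add: sum_extend_gens[OF x] extend_syzygies_def j)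
qed

lemma extend_syzygies_generate:
  assumes "(\<Sum>i<m + M. extend_gens m b x i * a i) = 0"
  shows "\<exists>c'. \<forall>i<m + M. a i = (\<Sum>j<k + M. extend_syzygies m k rel c j i * c' j)"
proof -
  let ?rel = "extend_syzygies m k rel c"
  have "(\<Sum>i<m. b i * (a i + (\<Sum>l<M. c l i * a (m + l)))) = 0"
    using assms by (simp only: sum_extend_gens[OF x])
  then obtain c0 where c0: "\<forall>i<m. a i + (\<Sum>l<M. c l i * a (m + l)) = (\<Sum>j<k. rel j i * c0 j)"
    using pres unfolding right_ideal_presentation_def by presburger
  define c' where "c' j = (if j < k then c0 j else - a (m + (j - k)))" for j
  have "a i = (\<Sum>j<k + M. ?rel j i * c' j)" if "i < m + M" for i
  proof (cases "i < m")
    case True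
    then have "(\<Sum>j<k + M. ?rel j i * c' j) = (\<Sum>j<k. rel j i * c0 j) - (\<Sum>l<M. c l i * a (m + l))"
      by (simp add: sum_lessThan_add extend_syzygies_def c'_def sum_negf)
    moreover have "a i = (\<Sum>j<k. rel j i * c0 j) - (\<Sum>l<M. c l i * a (m + l))"
      using c0 True by (simp add: eq_diff_eq)
    ultimately show ?thesis
      by simp
  next
    case False
    define l0 where "l0 = i - m"
    have i: "i = m + l0" and "l0 < M"
      using False that by (simp_all add: l0_def)
    then have "(\<Sum>l<M. ?rel (k + l) i * c' (k + l)) = a i"
      by (simp add: extend_syzygies_def c'_def if_distrib[of "\<lambda>x. x * _"] sum_negf cong: if_cong)
    then show ?thesis
      using False by (simp add: sum_lessThan_add extend_syzygies_def)
  qed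
  then show ?thesis
    by blast
qed

lemma right_ideal_presentation_extend:
  "right_ideal_presentation I (m + M) (extend_gens m b x) (k + M) (extend_syzygies m k rel c)"
  unfolding right_ideal_presentation_def
  using extend_gens_span extend_syzygies_vanish extend_syzygies_generate by blast

end

lemma right_ideal_presentation_unit:
  assumes "fp_right_ideal I" and "left_span I = UNIV"
  obtains m b k rel d where "right_ideal_presentation I m b k rel" and "(\<Sum>l<m. d l * b l) = 1"
proof -
  obtain m b k rel where pres: "right_ideal_presentation I m b k rel"
    using fp_right_ideal_presentation[OF assms(1)] .
  have "1 \<in> left_span I"
    using assms(2) by simp
  then obtain M :: nat and a x where one: "1 = (\<Sum>l<M. a l * x l)" and xI: "\<forall>l<M. x l \<in> I"
    unfolding left_span_def by blast
  have "\<forall>l. \<exists>c. l < M \<longrightarrow> x l = (\<Sum>i<m. b i * c i)"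
    using xI pres unfolding right_ideal_presentation_def by blast
  then obtain c where c: "\<forall>l<M. x l = (\<Sum>i<m. b i * c l i)"
    by metis
  have "(\<Sum>l<m + M. extend_gens m (\<lambda>_. 0) a l * extend_gens m b x l) = 1"
    by (simp add: one sum_lessThan_add extend_gens_def)
  then show ?thesis
    using right_ideal_presentation_extend[OF pres c] that by blast
qed

section \<open>Relations for \<open>K + I\<close>\<close>

lemma sum_swap_four:
  fixes a :: "'i \<Rightarrow> 'j \<Rightarrow> 'k \<Rightarrow> 'r::semiring_0"
  shows "(\<Sum>i\<in>I. \<Sum>l\<in>L. (\<Sum>j\<in>J. \<Sum>k\<in>K. a i j k * b j k l) * x l)
       = (\<Sum>j\<in>J. \<Sum>k\<in>K. (\<Sum>i\<in>I. a i j k) * (\<Sum>l\<in>L. b j k l * x l))"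
proof -
  have "(\<Sum>i\<in>I. \<Sum>l\<in>L. (\<Sum>j\<in>J. \<Sum>k\<in>K. a i j k * b j k l) * x l)
      = (\<Sum>i\<in>I. \<Sum>l\<in>L. \<Sum>j\<in>J. \<Sum>k\<in>K. a i j k * (b j k l * x l))"
    by (simp add: sum_distrib_right mult.assoc)
  also have "\<dots> = (\<Sum>i\<in>I. \<Sum>j\<in>J. \<Sum>k\<in>K. \<Sum>l\<in>L. a i j k * (b j k l * x l))"
    by (rule sum.cong[OF refl], subst sum.swap, rule sum.cong[OF refl], rule sum.swap)
  also have "\<dots> = (\<Sum>j\<in>J. \<Sum>i\<in>I. \<Sum>k\<in>K. \<Sum>l\<in>L. a i j k * (b j k l * x l))"
    by (rule sum.swap)
  also have "\<dots> = (\<Sum>j\<in>J. \<Sum>k\<in>K. \<Sum>i\<in>I. \<Sum>l\<in>L. a i j k * (b j k l * x l))"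
    by (rule sum.cong[OF refl], rule sum.swap)
  also have "\<dots> = (\<Sum>j\<in>J. \<Sum>k\<in>K. (\<Sum>i\<in>I. a i j k) * (\<Sum>l\<in>L. b j k l * x l))"
    by (simp add: sum_distrib_left sum_distrib_right)
      (rule sum.cong[OF refl], rule sum.cong[OF refl], rule sum.swap)
  finally show ?thesis .
qed

lemma sum_swap_mult:
  fixes a :: "'b \<Rightarrow> 'r::semiring_0"
  shows "(\<Sum>t\<in>A. a t * (\<Sum>s\<in>B. b t s * c s)) = (\<Sum>s\<in>B. (\<Sum>t\<in>A. a t * b t s) * c s)"
  by (simp add: sum_distrib_left sum_distrib_right mult.assoc) (rule sum.swap)

lemma fa_const_mult_mult: "fa_const c * x * (fa_const c' * y) = fa_const (c * c') * (x * y)"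
proof -
  have "x * (fa_const c' * y) = fa_const c' * (x * y)"
    by (simp only: mult.assoc[symmetric] fa_const_commute)
  then show ?thesis
    by (simp only: mult.assoc fa_const_mult[symmetric])
qed

text \<open>\<open>A\<close> is presented by the generators \<open>x 0, \<dots>, x (n - 1)\<close> and the relations \<open>R\<close>;
  \<open>\<beta> i\<close>, \<open>\<delta> l\<close> and \<open>\<rho> j i\<close> are polynomials representing the generators \<open>b i\<close> of
  \<open>I\<close>, elements \<open>d l\<close> with \<open>\<Sum>l. d l * b l = 1\<close>, and the syzygies \<open>rel j i\<close>. The
  generators of \<open>K + I\<close> are \<open>y j i l\<close> (to be evaluated at \<open>b i * x j * d l\<close>, where
  \<open>x n = 1\<close>) and \<open>z l\<close> (evaluated at \<open>b l\<close>), indexed by \<open>y_idx j i l\<close> and \<open>z_idx l\<close>.\<close>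

locale sandwich_relations =
  fixes n m k :: nat and R :: "'k::field free_alg set"
    and \<delta> \<beta> :: "nat \<Rightarrow> 'k free_alg" and \<rho> :: "nat \<Rightarrow> nat \<Rightarrow> 'k free_alg"
  assumes R_subset: "R \<subseteq> free_alg_n n" and finite_R: "finite R"
    and \<delta>_in: "\<And>l. \<delta> l \<in> free_alg_n n" and \<beta>_in: "\<And>i. \<beta> i \<in> free_alg_n n"
    and \<rho>_in: "\<And>j i. \<rho> j i \<in> free_alg_n n"
begin

definition y_idx :: "nat \<Rightarrow> nat \<Rightarrow> nat \<Rightarrow> nat" where
  "y_idx j i l = (j * m + i) * m + l"

definition z_idx :: "nat \<Rightarrow> nat" where
  "z_idx l = Suc n * m * m + l"

definition num_gens :: nat where
  "num_gens = Suc n * m * m + m"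

abbreviation y :: "nat \<Rightarrow> nat \<Rightarrow> nat \<Rightarrow> 'k free_alg" where
  "y j i l \<equiv> fa_var (y_idx j i l)"

abbreviation z :: "nat \<Rightarrow> 'k free_alg" where
  "z l \<equiv> fa_var (z_idx l)"

definition var_or_one :: "nat \<Rightarrow> 'k free_alg" where
  "var_or_one j = (if j < n then fa_var j else 1)"

text \<open>\<open>sandwich p i l\<close> represents \<open>b i * p * d l\<close>; inserting \<open>1 = \<Sum>t. d t * b t\<close>
  between the letters of a word turns it into a sum of products of the \<open>y j i l\<close>.\<close>

fun sandwich_word :: "nat list \<Rightarrow> nat \<Rightarrow> nat \<Rightarrow> 'k free_alg" where
  "sandwich_word [] i l = y n i l"
| "sandwich_word (j # w) i l = (\<Sum>t<m. y j i t * sandwich_word w t l)"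

definition sandwich :: "'k free_alg \<Rightarrow> nat \<Rightarrow> nat \<Rightarrow> 'k free_alg" where
  "sandwich p i l = (\<Sum>w\<in>Poly_Mapping.keys p.
     fa_const (Poly_Mapping.lookup p w) * sandwich_word (letters w) i l)"

text \<open>\<open>normal_form c q\<close> represents \<open>c + \<Sum>i. b i * q i = c + \<Sum>i l. b i * q i * d l * b l\<close>.\<close>

definition ideal_part :: "(nat \<Rightarrow> 'k free_alg) \<Rightarrow> 'k free_alg" where
  "ideal_part q = (\<Sum>i<m. \<Sum>l<m. sandwich (q i) i l * z l)"

definition normal_form :: "'k \<Rightarrow> (nat \<Rightarrow> 'k free_alg) \<Rightarrow> 'k free_alg" where
  "normal_form c q = fa_const c + ideal_part q"

text \<open>Under the evaluation, the six families of relations say: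
  \<open>b i * r * d l = 0\<close> for \<open>r \<in> R\<close>;
  \<open>\<Sum>t. (b i * d t) * (b t * x j * d l) = b i * x j * d l\<close>;
  \<open>b i * x j * d l = \<Sum>l'. b i * (x j * d l) * d l' * b l'\<close>;
  \<open>b l = \<Sum>l'. b l * d l' * b l'\<close>;
  \<open>\<Sum>i. b i * rel j i * d l = 0\<close>;
  \<open>b l * (b i * x j * d l') = b l * (b i * x j) * d l'\<close>.\<close>

definition rels :: "'k free_alg set" where
  "rels = (\<lambda>(r, i, l). sandwich r i l) ` (R \<times> {..<m} \<times> {..<m})
    \<union> (\<lambda>(j, i, l). (\<Sum>t<m. y n i t * y j t l) - y j i l) ` ({..n} \<times> {..<m} \<times> {..<m})
    \<union> (\<lambda>(j, i, l). y j i l - (\<Sum>l'<m. sandwich (var_or_one j * \<delta> l) i l' * z l'))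
        ` ({..n} \<times> {..<m} \<times> {..<m})
    \<union> (\<lambda>l. z l - (\<Sum>l'<m. sandwich 1 l l' * z l')) ` {..<m}
    \<union> (\<lambda>(j, l). \<Sum>i<m. sandwich (\<rho> j i) i l) ` ({..<k} \<times> {..<m})
    \<union> (\<lambda>(j, i, l, l'). z l * y j i l' - sandwich (\<beta> i * var_or_one j) l l')
        ` ({..n} \<times> {..<m} \<times> {..<m} \<times> {..<m})"

abbreviation rcong :: "'k free_alg \<Rightarrow> 'k free_alg \<Rightarrow> bool" where
  "rcong \<equiv> fa_cong num_gens rels"

lemma y_idx_less: "j \<le> n \<Longrightarrow> i < m \<Longrightarrow> l < m \<Longrightarrow> y_idx j i l < Suc n * m * m"
proof -
  assume "j \<le> n" "i < m" "l < m"
  then have "y_idx j i l < (j * m + i + 1) * m"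
    by (simp add: y_idx_def algebra_simps)
  moreover have "j * m + i + 1 \<le> n * m + m"
    using \<open>i < m\<close> mult_le_mono1[OF \<open>j \<le> n\<close>, of m] by linarith
  then have "(j * m + i + 1) * m \<le> Suc n * m * m"
    by (intro mult_le_mono1) simp
  ultimately show ?thesis
    by linarith
qed

lemma y_in [intro]: "j \<le> n \<Longrightarrow> i < m \<Longrightarrow> l < m \<Longrightarrow> y j i l \<in> free_alg_n num_gens"
  using y_idx_less[of j i l] by (intro free_alg_n_var) (simp add: num_gens_def)

lemma z_in [intro]: "l < m \<Longrightarrow> z l \<in> free_alg_n num_gens"
  by (intro free_alg_n_var) (simp add: z_idx_def num_gens_def)

lemma var_or_one_in [intro]: "var_or_one j \<in> free_alg_n n"
  by (auto simp: var_or_one_def)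

lemma sandwich_word_in [intro]:
  "set w \<subseteq> {..n} \<Longrightarrow> i < m \<Longrightarrow> l < m \<Longrightarrow> sandwich_word w i l \<in> free_alg_n num_gens"
  by (induction w arbitrary: i) (auto intro!: free_alg_n_sum free_alg_n_mult)

lemma sandwich_in [intro]:
  "p \<in> free_alg_n n \<Longrightarrow> i < m \<Longrightarrow> l < m \<Longrightarrow> sandwich p i l \<in> free_alg_n num_gens"
  unfolding sandwich_def using free_alg_n_keys[of p n]
  by (intro free_alg_n_sum free_alg_n_mult free_alg_n_const sandwich_word_in) fastforce+

lemma ideal_part_in [intro]:
  "(\<And>i. i < m \<Longrightarrow> q i \<in> free_alg_n n) \<Longrightarrow> ideal_part q \<in> free_alg_n num_gens"
  unfolding ideal_part_def by (intro free_alg_n_sum free_alg_n_mult sandwich_in z_in) auto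

lemma normal_form_in [intro]:
  "(\<And>i. i < m \<Longrightarrow> q i \<in> free_alg_n n) \<Longrightarrow> normal_form c q \<in> free_alg_n num_gens"
  unfolding normal_form_def by (intro free_alg_n_add free_alg_n_const ideal_part_in)

lemma finite_rels: "finite rels"
  unfolding rels_def using finite_R by auto

lemma rels_subset: "rels \<subseteq> free_alg_n num_gens"
  unfolding rels_def using R_subset \<delta>_in \<beta>_in \<rho>_in
  by (auto intro!: free_alg_n_sum free_alg_n_mult free_alg_n_diff sandwich_in)

lemma rcong_rels_zero: "a \<in> rels \<Longrightarrow> rcong a 0"
  using rels_subset by (auto simp: fa_cong_def fa_ideal_gen_generator)

lemma rels_R: "r \<in> R \<Longrightarrow> i < m \<Longrightarrow> l < m \<Longrightarrow> sandwich r i l \<in> rels"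
  unfolding rels_def
  by (rule UnI1, rule UnI1, rule UnI1, rule UnI1, rule UnI1, rule image_eqI[where x = "(r, i, l)"]) auto

lemma rels_y_y: "j \<le> n \<Longrightarrow> i < m \<Longrightarrow> l < m \<Longrightarrow> (\<Sum>t<m. y n i t * y j t l) - y j i l \<in> rels"
  unfolding rels_def
  by (rule UnI1, rule UnI1, rule UnI1, rule UnI1, rule UnI2, rule image_eqI[where x = "(j, i, l)"]) auto

lemma rels_y_z:
  "j \<le> n \<Longrightarrow> i < m \<Longrightarrow> l < m \<Longrightarrow> y j i l - (\<Sum>l'<m. sandwich (var_or_one j * \<delta> l) i l' * z l') \<in> rels"
  unfolding rels_def
  by (rule UnI1, rule UnI1, rule UnI1, rule UnI2, rule image_eqI[where x = "(j, i, l)"]) auto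

lemma rels_z_z: "l < m \<Longrightarrow> z l - (\<Sum>l'<m. sandwich 1 l l' * z l') \<in> rels"
  unfolding rels_def
  by (rule UnI1, rule UnI1, rule UnI2, rule image_eqI[where x = l]) auto

lemma rels_syzygy: "j < k \<Longrightarrow> l < m \<Longrightarrow> (\<Sum>i<m. sandwich (\<rho> j i) i l) \<in> rels"
  unfolding rels_def
  by (rule UnI1, rule UnI2, rule image_eqI[where x = "(j, l)"]) auto

lemma rels_z_y:
  "j \<le> n \<Longrightarrow> i < m \<Longrightarrow> l < m \<Longrightarrow> l' < m \<Longrightarrow> z l * y j i l' - sandwich (\<beta> i * var_or_one j) l l' \<in> rels"
  unfolding rels_def
  by (rule UnI2, rule image_eqI[where x = "(j, i, l, l')"]) auto

lemma sandwich_zero [simp]: "sandwich 0 i l = 0"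
  by (simp add: sandwich_def)

lemma sandwich_add: "sandwich (p + q) i l = sandwich p i l + sandwich q i l"
  unfolding sandwich_def
  by (rule setsum_keys_plus_distrib) (simp_all add: single_add distrib_right)

lemma sandwich_single: "sandwich (Poly_Mapping.single w c) i l = fa_const c * sandwich_word (letters w) i l"
  by (simp add: sandwich_def)

lemma sandwich_diff: "sandwich (p - q) i l = sandwich p i l - sandwich q i l"
  using sandwich_add[of "p - q" q i l] by (simp add: eq_diff_eq)

lemma sandwich_sum: "sandwich (sum f S) i l = (\<Sum>x\<in>S. sandwich (f x) i l)"
  by (induction S rule: infinite_finite_induct) (auto simp: sandwich_add)

lemma sandwich_const_mult: "sandwich (fa_const c * p) i l = fa_const c * sandwich p i l"
  by (induction p rule: poly_mapping_induct)
    (simp_all add: mult_single sandwich_single sandwich_add distrib_left mult.assoc[symmetric])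

lemma rcong_sum_mult:
  "(\<And>t. t < m \<Longrightarrow> rcong (f t) (f' t)) \<Longrightarrow> (\<And>t. t < m \<Longrightarrow> rcong (g t) (g' t))
    \<Longrightarrow> rcong (\<Sum>t<m. f t * g t) (\<Sum>t<m. f' t * g' t)"
  by (intro fa_cong_sum fa_cong_mult) auto

lemma sandwich_word_y_left:
  assumes "set w \<subseteq> {..<n}" and "i < m" and "l < m"
  shows "rcong (\<Sum>t<m. y n i t * sandwich_word w t l) (sandwich_word w i l)"
proof (cases w)
  case Nil
  then show ?thesis
    using assms rels_y_y[of n i l]
      by (auto intro!: fa_cong_generator free_alg_n_sum free_alg_n_mult)
next
  case (Cons j w')
  then have j: "j < n" and w': "set w' \<subseteq> {..<n}"
    using assms(1) by auto
  have "(\<Sum>t<m. y n i t * sandwich_word w t l) = (\<Sum>s<m. (\<Sum>t<m. y n i t * y j t s) * sandwich_word w' s l)"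
    using Cons by (simp add: sum_swap_mult)
  moreover have "rcong (\<Sum>t<m. y n i t * y j t s) (y j i s)" if "s < m" for s
    using assms j that rels_y_y[of j i s]
      by (intro fa_cong_generator) (auto intro!: free_alg_n_sum free_alg_n_mult)
  then have "rcong (\<Sum>s<m. (\<Sum>t<m. y n i t * y j t s) * sandwich_word w' s l)
      (\<Sum>s<m. y j i s * sandwich_word w' s l)"
    using assms w' by (intro rcong_sum_mult fa_cong_refl sandwich_word_in) auto
  ultimately show ?thesis
    using Cons by simp
qed

lemma sandwich_word_append:
  assumes "set u \<subseteq> {..<n}" and "set v \<subseteq> {..<n}" and "i < m" and "l < m"
  shows "rcong (sandwich_word (u @ v) i l) (\<Sum>t<m. sandwich_word u i t * sandwich_word v t l)"
  using assms
proof (induction u arbitrary: i)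
  case Nil
  then show ?case
    using sandwich_word_y_left by (simp add: fa_cong_sym)
next
  case (Cons j u)
  then have "rcong (\<Sum>t<m. y j i t * sandwich_word (u @ v) t l)
      (\<Sum>t<m. y j i t * (\<Sum>s<m. sandwich_word u t s * sandwich_word v s l))"
    by (intro rcong_sum_mult fa_cong_refl y_in) auto
  then show ?case
    by (simp add: sum_swap_mult)
qed

lemma sandwich_mult:
  assumes "p \<in> free_alg_n n" and q: "q \<in> free_alg_n n" and "i < m" and "l < m"
  shows "rcong (sandwich (p * q) i l) (\<Sum>t<m. sandwich p i t * sandwich q t l)"
  using assms(1)
proof (induction p rule: free_alg_n_induct)
  case zero
  then show ?case
    by (simp add: fa_cong_refl)
next
  case (add a b)
  then show ?case
    using fa_cong_add[OF add.IH] by (simp add: distrib_right sandwich_add sum.distrib)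
next
  case (single u c)
  show ?case
    using q
  proof (induction q rule: free_alg_n_induct)
    case zero
    then show ?case
      by (simp add: fa_cong_refl)
  next
    case (add a b)
    then show ?case
      using fa_cong_add[OF add.IH] by (simp add: distrib_left sandwich_add sum.distrib)
  next
    case (single v c')
    have "rcong (fa_const (c * c') * sandwich_word (letters u @ letters v) i l)
        (fa_const (c * c') * (\<Sum>t<m. sandwich_word (letters u) i t * sandwich_word (letters v) t l))"
      using \<open>set (letters u) \<subseteq> {..<n}\<close> single assms
      by (intro fa_cong_mult fa_cong_refl free_alg_n_const sandwich_word_append)
    then show ?case
      by (simp add: mult_single sandwich_single sum_distrib_left fa_const_mult_mult)
  qed
qed

lemma sandwich_mult_rcong_zero_right:
  assumes "p \<in> free_alg_n n" and "q \<in> free_alg_n n" and "i < m" and "l < m"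
    and zero: "\<And>t. t < m \<Longrightarrow> rcong (sandwich q t l) 0"
  shows "rcong (sandwich (p * q) i l) 0"
proof -
  have "rcong (\<Sum>t<m. sandwich p i t * sandwich q t l) (\<Sum>t<m. sandwich p i t * 0)"
    using assms by (intro rcong_sum_mult fa_cong_refl sandwich_in zero) auto
  then show ?thesis
    using fa_cong_trans[OF sandwich_mult[OF assms(1-4)]] by simp
qed

lemma sandwich_mult_rcong_zero_left:
  assumes "p \<in> free_alg_n n" and "q \<in> free_alg_n n" and "i < m" and "l < m"
    and zero: "\<And>t. t < m \<Longrightarrow> rcong (sandwich p i t) 0"
  shows "rcong (sandwich (p * q) i l) 0"
proof -
  have "rcong (\<Sum>t<m. sandwich p i t * sandwich q t l) (\<Sum>t<m. 0 * sandwich q t l)"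
    using assms by (intro rcong_sum_mult fa_cong_refl sandwich_in zero) auto
  then show ?thesis
    using fa_cong_trans[OF sandwich_mult[OF assms(1-4)]] by simp
qed

lemma sandwich_fa_ideal_gen:
  assumes "x \<in> fa_ideal_gen n R" and "i < m" and "l < m"
  shows "rcong (sandwich x i l) 0"
proof -
  have "rcong (sandwich (u * r * v) i l) 0"
    if u: "u \<in> free_alg_n n" and "r \<in> R" and v: "v \<in> free_alg_n n" for u r v
  proof -
    have r: "r \<in> free_alg_n n"
      using R_subset \<open>r \<in> R\<close> by auto
    have "rcong (sandwich (u * r) i t) 0" if "t < m" for t
      using \<open>i < m\<close> that \<open>r \<in> R\<close>
      by (intro sandwich_mult_rcong_zero_right[OF u r] rcong_rels_zero rels_R)
    then show ?thesis
      using assms by (intro sandwich_mult_rcong_zero_left[OF free_alg_n_mult[OF u r] v])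
  qed
  moreover obtain M :: nat and u r v where "x = (\<Sum>j<M. u j * r j * v j)"
    and "\<forall>j<M. u j \<in> free_alg_n n \<and> r j \<in> R \<and> v j \<in> free_alg_n n"
    using assms(1) unfolding mem_fa_ideal_gen_iff by blast
  ultimately have "rcong (\<Sum>j<M. sandwich (u j * r j * v j) i l) (\<Sum>j<M. 0)"
    by (intro fa_cong_sum) simp
  then show ?thesis
    using \<open>x = _\<close> by (simp add: sandwich_sum)
qed

lemma z_mult_sandwich_word:
  assumes w: "set w \<subseteq> {..<n}" and "i < m" and "l < m" and "l' < m"
  shows "rcong (z l * sandwich_word w i l') (sandwich (\<beta> i * Poly_Mapping.single (Word w) 1) l l')"
proof (cases w)
  case Nil
  then have "\<beta> i * Poly_Mapping.single (Word w) 1 = \<beta> i * var_or_one n"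
    by (simp add: var_or_one_def zero_word_def[symmetric])
  then show ?thesis
    using Nil assms rels_z_y[of n i l l'] \<beta>_in by (auto intro!: fa_cong_generator free_alg_n_mult)
next
  case (Cons j w')
  then have j: "j < n" and w': "set w' \<subseteq> {..<n}"
    using w by auto
  have "rcong (z l * y j i t) (sandwich (\<beta> i * var_or_one j) l t)" if "t < m" for t
    using assms j that rels_z_y[of j i l t] \<beta>_in
      by (intro fa_cong_generator) (auto intro!: free_alg_n_mult)
  then have "rcong (\<Sum>t<m. z l * y j i t * sandwich_word w' t l')
      (\<Sum>t<m. sandwich (\<beta> i * var_or_one j) l t * sandwich (Poly_Mapping.single (Word w') 1) t l')"
    using w' assms
      by (simp add: sandwich_single) (intro rcong_sum_mult fa_cong_refl sandwich_word_in; auto)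
  moreover have "rcong (sandwich (\<beta> i * var_or_one j * Poly_Mapping.single (Word w') 1) l l')
      (\<Sum>t<m. sandwich (\<beta> i * var_or_one j) l t * sandwich (Poly_Mapping.single (Word w') 1) t l')"
    using w' \<beta>_in assms by (intro sandwich_mult) (auto intro!: free_alg_n_mult free_alg_n_single)
  ultimately show ?thesis
    using Cons j
    by (simp add: sum_distrib_left mult.assoc fa_single_Cons var_or_one_def)
      (meson fa_cong_sym fa_cong_trans)
qed

lemma z_mult_sandwich:
  assumes "q \<in> free_alg_n n" and "i < m" and "l < m" and "l' < m"
  shows "rcong (z l * sandwich q i l') (sandwich (\<beta> i * q) l l')"
  using assms(1)
proof (induction q rule: free_alg_n_induct)
  case zero
  then show ?case
    by (simp add: fa_cong_refl)
next
  case (add a b)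
  then show ?case
    using fa_cong_add[OF add.IH] by (simp add: sandwich_add distrib_left)
next
  case (single w c)
  have "z l * sandwich (Poly_Mapping.single w c) i l' = fa_const c * (z l * sandwich_word (letters w) i l')"
    by (simp add: sandwich_single mult.assoc[symmetric] fa_const_commute)
  moreover have "\<beta> i * Poly_Mapping.single w c = fa_const c * (\<beta> i * Poly_Mapping.single (Word (letters w)) 1)"
    by (simp add: fa_single_eq_const_mult[of w c] mult.assoc[symmetric] fa_const_commute)
  moreover have "rcong (fa_const c * (z l * sandwich_word (letters w) i l'))
      (fa_const c * sandwich (\<beta> i * Poly_Mapping.single (Word (letters w)) 1) l l')"
    using single assms by (intro fa_cong_mult fa_cong_refl free_alg_n_const z_mult_sandwich_word)
  ultimately show ?case
    by (simp add: sandwich_const_mult)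
qed

lemma ideal_part_add: "ideal_part (\<lambda>i. q i + q' i) = ideal_part q + ideal_part q'"
  by (simp add: ideal_part_def sandwich_add distrib_right sum.distrib)

lemma ideal_part_diff: "ideal_part (\<lambda>i. q i - q' i) = ideal_part q - ideal_part q'"
  by (simp add: ideal_part_def sandwich_diff left_diff_distrib sum_subtractf)

lemma ideal_part_const_mult: "ideal_part (\<lambda>i. fa_const c * q i) = fa_const c * ideal_part q"
  by (simp add: ideal_part_def sandwich_const_mult sum_distrib_left mult.assoc)

lemma ideal_part_mult_const: "ideal_part (\<lambda>i. q i * fa_const c) = ideal_part q * fa_const c"
  by (simp add: fa_const_commute[of _ c] ideal_part_const_mult)

lemma normal_form_add: "normal_form (c + c') (\<lambda>i. q i + q' i) = normal_form c q + normal_form c' q'"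
  by (simp add: normal_form_def ideal_part_add single_add add_ac)

lemma ideal_part_syzygy:
  assumes q: "\<And>i. i < m \<Longrightarrow> q i \<in> free_alg_n n" and c: "\<And>j. c j \<in> free_alg_n n"
    and syz: "\<And>i. i < m \<Longrightarrow> q i - (\<Sum>j<k. \<rho> j i * c j) \<in> fa_ideal_gen n R"
  shows "rcong (ideal_part q) 0"
proof -
  let ?S = "\<lambda>j t. \<Sum>l<m. sandwich (c j) t l * z l"
  have "rcong (sandwich (q i) i l) (\<Sum>j<k. \<Sum>t<m. sandwich (\<rho> j i) i t * sandwich (c j) t l)"
    if "i < m" "l < m" for i l
  proof -
    have "sandwich (q i) i l
        = sandwich (q i - (\<Sum>j<k. \<rho> j i * c j)) i l + (\<Sum>j<k. sandwich (\<rho> j i * c j) i l)"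
      by (simp add: sandwich_diff sandwich_sum)
    moreover have "rcong (\<Sum>j<k. sandwich (\<rho> j i * c j) i l)
        (\<Sum>j<k. \<Sum>t<m. sandwich (\<rho> j i) i t * sandwich (c j) t l)"
      using \<rho>_in c that by (intro fa_cong_sum sandwich_mult) auto
    ultimately show ?thesis
      using fa_cong_add[OF sandwich_fa_ideal_gen[OF syz[OF that(1)] that]] by simp
  qed
  then have "rcong (ideal_part q)
      (\<Sum>i<m. \<Sum>l<m. (\<Sum>j<k. \<Sum>t<m. sandwich (\<rho> j i) i t * sandwich (c j) t l) * z l)"
    unfolding ideal_part_def by (intro fa_cong_sum fa_cong_mult fa_cong_refl z_in) auto
  also have "(\<Sum>i<m. \<Sum>l<m. (\<Sum>j<k. \<Sum>t<m. sandwich (\<rho> j i) i t * sandwich (c j) t l) * z l)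
      = (\<Sum>j<k. \<Sum>t<m. (\<Sum>i<m. sandwich (\<rho> j i) i t) * ?S j t)"
    by (rule sum_swap_four)
  finally have "rcong (ideal_part q) (\<Sum>j<k. \<Sum>t<m. (\<Sum>i<m. sandwich (\<rho> j i) i t) * ?S j t)" .
  moreover have "rcong (\<Sum>j<k. \<Sum>t<m. (\<Sum>i<m. sandwich (\<rho> j i) i t) * ?S j t) (\<Sum>j<k. \<Sum>t<m. 0 * ?S j t)"
    using c by (intro fa_cong_sum fa_cong_mult rcong_rels_zero rels_syzygy fa_cong_refl
        free_alg_n_sum free_alg_n_mult sandwich_in z_in) auto
  ultimately show ?thesis
    by (simp add: fa_cong_trans)
qed

lemma ideal_part_mult:
  assumes q: "\<And>i. i < m \<Longrightarrow> q i \<in> free_alg_n n" and q': "\<And>i. i < m \<Longrightarrow> q' i \<in> free_alg_n n"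
  shows "rcong (ideal_part q * ideal_part q') (ideal_part (\<lambda>i. q i * (\<Sum>i'<m. \<beta> i' * q' i')))"
proof -
  let ?Q = "\<Sum>i'<m. \<beta> i' * q' i'"
  have Q: "?Q \<in> free_alg_n n"
    using q' \<beta>_in by (auto intro!: free_alg_n_sum free_alg_n_mult)
  have z_ideal_part: "rcong (z l * ideal_part q') (\<Sum>l'<m. sandwich ?Q l l' * z l')" if "l < m" for l
  proof -
    have "rcong (\<Sum>i<m. \<Sum>l'<m. z l * sandwich (q' i) i l' * z l')
        (\<Sum>i<m. \<Sum>l'<m. sandwich (\<beta> i * q' i) l l' * z l')"
      using that q' by (intro fa_cong_sum fa_cong_mult z_mult_sandwich fa_cong_refl z_in) auto
    moreover have "(\<Sum>i<m. \<Sum>l'<m. sandwich (\<beta> i * q' i) l l' * z l') = (\<Sum>l'<m. sandwich ?Q l l' * z l')"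
      by (simp add: sandwich_sum sum_distrib_right) (rule sum.swap)
    ultimately show ?thesis
      by (simp add: ideal_part_def sum_distrib_left mult.assoc)
  qed
  have "ideal_part q * ideal_part q' = (\<Sum>i<m. \<Sum>l<m. sandwich (q i) i l * (z l * ideal_part q'))"
    by (simp add: ideal_part_def sum_distrib_right mult.assoc)
  moreover have "rcong (\<Sum>i<m. \<Sum>l<m. sandwich (q i) i l * (z l * ideal_part q'))
      (\<Sum>i<m. \<Sum>l<m. sandwich (q i) i l * (\<Sum>l'<m. sandwich ?Q l l' * z l'))"
    using q z_ideal_part by (intro fa_cong_sum fa_cong_mult fa_cong_refl sandwich_in) auto
  moreover have "(\<Sum>i<m. \<Sum>l<m. sandwich (q i) i l * (\<Sum>l'<m. sandwich ?Q l l' * z l'))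
      = (\<Sum>i<m. \<Sum>l'<m. (\<Sum>l<m. sandwich (q i) i l * sandwich ?Q l l') * z l')"
    by (intro sum.cong refl sum_swap_mult)
  moreover have "rcong (\<Sum>i<m. \<Sum>l'<m. (\<Sum>l<m. sandwich (q i) i l * sandwich ?Q l l') * z l')
      (ideal_part (\<lambda>i. q i * ?Q))"
    unfolding ideal_part_def using q Q
    by (intro fa_cong_sum fa_cong_mult fa_cong_sym[OF sandwich_mult] fa_cong_refl z_in) auto
  ultimately show ?thesis
    by (simp only: fa_cong_trans)
qed

lemma normal_form_mult:
  assumes q: "\<And>i. i < m \<Longrightarrow> q i \<in> free_alg_n n" and q': "\<And>i. i < m \<Longrightarrow> q' i \<in> free_alg_n n"
  shows "rcong (normal_form c q * normal_form c' q')
    (normal_form (c * c') (\<lambda>i. q i * fa_const c' + fa_const c * q' i + q i * (\<Sum>i'<m. \<beta> i' * q' i')))"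
proof -
  let ?lin = "fa_const (c * c') + (fa_const c * ideal_part q' + ideal_part q * fa_const c')"
  have "normal_form c q * normal_form c' q' = ?lin + ideal_part q * ideal_part q'"
    by (simp add: normal_form_def distrib_left distrib_right fa_const_mult add_ac)
  moreover have "normal_form (c * c') (\<lambda>i. q i * fa_const c' + fa_const c * q' i + q i * (\<Sum>i'<m. \<beta> i' * q' i'))
      = ?lin + ideal_part (\<lambda>i. q i * (\<Sum>i'<m. \<beta> i' * q' i'))"
    by (simp add: normal_form_def ideal_part_add ideal_part_const_mult ideal_part_mult_const add_ac)
  moreover have "?lin \<in> free_alg_n num_gens"
    using q q' by (intro free_alg_n_add free_alg_n_mult free_alg_n_const ideal_part_in) auto
  ultimately show ?thesis
    using fa_cong_add[OF fa_cong_refl ideal_part_mult[OF q q']] by simp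
qed

lemma normal_form_y:
  assumes "j \<le> n" and "i < m" and "l < m"
  shows "rcong (normal_form 0 (\<lambda>i'. if i' = i then var_or_one j * \<delta> l else 0)) (y j i l)"
proof -
  have "normal_form 0 (\<lambda>i'. if i' = i then var_or_one j * \<delta> l else 0)
      = (\<Sum>l'<m. sandwich (var_or_one j * \<delta> l) i l' * z l')"
  proof -
    have "normal_form 0 (\<lambda>i'. if i' = i then var_or_one j * \<delta> l else 0)
        = (\<Sum>i'<m. if i' = i then \<Sum>l'<m. sandwich (var_or_one j * \<delta> l) i l' * z l' else 0)"
      unfolding normal_form_def ideal_part_def single_zero add_0_left by (intro sum.cong) auto
    then show ?thesis
      using assms by (simp add: sum.delta')
  qed
  moreover have "rcong (y j i l) (\<Sum>l'<m. sandwich (var_or_one j * \<delta> l) i l' * z l')"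
    using assms rels_y_z[OF assms] \<delta>_in
      by (intro fa_cong_generator) (auto intro!: free_alg_n_sum free_alg_n_mult)
  ultimately show ?thesis
    by (simp add: fa_cong_sym)
qed

lemma normal_form_z:
  assumes "l < m"
  shows "rcong (normal_form 0 (\<lambda>i. if i = l then 1 else 0)) (z l)"
proof -
  have "normal_form 0 (\<lambda>i. if i = l then 1 else 0) = (\<Sum>l'<m. sandwich 1 l l' * z l')"
  proof -
    have "normal_form 0 (\<lambda>i. if i = l then 1 else 0)
        = (\<Sum>i<m. if i = l then \<Sum>l'<m. sandwich 1 l l' * z l' else 0)"
      unfolding normal_form_def ideal_part_def single_zero add_0_left by (intro sum.cong) auto
    then show ?thesis
      using assms by (simp add: sum.delta')
  qed
  moreover have "rcong (z l) (\<Sum>l'<m. sandwich 1 l l' * z l')"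
    using assms rels_z_z[OF assms]
      by (intro fa_cong_generator) (auto intro!: free_alg_n_sum free_alg_n_mult)
  ultimately show ?thesis
    by (simp add: fa_cong_sym)
qed

end

section \<open>Normal forms in \<open>K + I\<close>\<close>

lemma mult_central_plus_lincomb:
  fixes u v :: "'a::ring_1"
  assumes central: "\<And>x. u * x = x * u"
  shows "(u + (\<Sum>i<m. b i * a i)) * (v + (\<Sum>i<m. b i * a' i))
       = u * v + (\<Sum>i<m. b i * (a i * v + u * a' i + a i * (\<Sum>k<m. b k * a' k)))"
proof -
  let ?X = "\<Sum>i<m. b i * a i" and ?Y = "\<Sum>i<m. b i * a' i"
  have "b i * (u * a' i) = u * (b i * a' i)" for i
    by (simp only: mult.assoc[symmetric] central[of "b i"])
  then have "(\<Sum>i<m. b i * (u * a' i)) = u * ?Y"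
    by (simp add: sum_distrib_left)
  moreover have "(\<Sum>i<m. b i * (a i * w)) = ?X * w" for w
    by (simp add: sum_distrib_right mult.assoc)
  ultimately have "(\<Sum>i<m. b i * (a i * v + u * a' i + a i * ?Y)) = ?X * v + u * ?Y + ?X * ?Y"
    by (simp only: distrib_left sum.distrib)
  then show ?thesis
    by (simp add: distrib_left distrib_right add_ac)
qed

locale K_plus_ideal =
  fixes \<phi> :: "'k::field \<Rightarrow> 'a::ring_1" and n :: nat and g :: "nat \<Rightarrow> 'a" and R :: "'k free_alg set"
    and I :: "'a set" and m k :: nat and b :: "nat \<Rightarrow> 'a" and rel :: "nat \<Rightarrow> nat \<Rightarrow> 'a"
    and d :: "nat \<Rightarrow> 'a"
  assumes \<phi>: "k_algebra \<phi>"
    and eval_onto: "UNIV = fa_eval \<phi> g ` free_alg_n n"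
    and finite_relations: "finite R" and relations_in: "R \<subseteq> free_alg_n n"
    and kernel: "{p \<in> free_alg_n n. fa_eval \<phi> g p = 0} = fa_ideal_gen n R"
    and right_ideal: "right_ideal I"
    and presentation: "right_ideal_presentation I m b k rel"
    and unit: "(\<Sum>l<m. d l * b l) = 1"
    and one_notin: "1 \<notin> I"
begin

abbreviation eval_A :: "'k free_alg \<Rightarrow> 'a" where
  "eval_A \<equiv> fa_eval \<phi> g"

definition lift :: "'a \<Rightarrow> 'k free_alg" where
  "lift x = (SOME p. p \<in> free_alg_n n \<and> eval_A p = x)"

lemma lift: "lift x \<in> free_alg_n n" "eval_A (lift x) = x"
proof -
  have "\<exists>p. p \<in> free_alg_n n \<and> eval_A p = x"
    using eval_onto by (metis UNIV_I image_iff)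
  then show "lift x \<in> free_alg_n n" "eval_A (lift x) = x"
    unfolding lift_def by (metis (mono_tags, lifting) someI_ex)+
qed

sublocale sandwich_relations n m k R "\<lambda>l. lift (d l)" "\<lambda>i. lift (b i)" "\<lambda>j i. lift (rel j i)"
  using finite_relations relations_in lift by unfold_locales auto

definition x_or_one :: "nat \<Rightarrow> 'a" where
  "x_or_one j = (if j < n then g j else 1)"

definition gens :: "nat \<Rightarrow> 'a" where
  "gens t = (if t < Suc n * m * m then b (t div m mod m) * x_or_one (t div m div m) * d (t mod m)
     else b (t - Suc n * m * m))"

abbreviation eval_B :: "'k free_alg \<Rightarrow> 'a" where
  "eval_B \<equiv> fa_eval \<phi> gens"

lemma gens_y: "j \<le> n \<Longrightarrow> i < m \<Longrightarrow> l < m \<Longrightarrow> gens (y_idx j i l) = b i * x_or_one j * d l"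
  using y_idx_less[of j i l] by (simp add: gens_def y_idx_def)

lemma gens_z: "gens (z_idx l) = b l"
  by (simp add: gens_def z_idx_def)

lemma y_idx_decode:
  assumes "t < Suc n * m * m"
  obtains j i l where "j \<le> n" "i < m" "l < m" "t = y_idx j i l"
proof
  have "m > 0"
    using assms by (cases m) auto
  moreover have "t div m div m < Suc n"
    using assms by (simp add: less_mult_imp_div_less)
  ultimately show "t div m div m \<le> n" "t div m mod m < m" "t mod m < m"
    "t = y_idx (t div m div m) (t div m mod m) (t mod m)"
    by (simp_all add: y_idx_def)
qed

lemma eval_var_or_one: "eval_A (var_or_one j) = x_or_one j"
  by (simp add: var_or_one_def x_or_one_def fa_eval_var[OF \<phi>] fa_eval_one[OF \<phi>])

lemma sum_unit_insert: "(\<Sum>t<m. u * d t * (b t * v)) = u * v"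
proof -
  have "(\<Sum>t<m. u * d t * (b t * v)) = u * (\<Sum>t<m. d t * b t) * v"
    by (simp add: sum_distrib_left sum_distrib_right mult.assoc)
  then show ?thesis
    by (simp add: unit)
qed

lemma eval_sandwich_word:
  "set w \<subseteq> {..<n} \<Longrightarrow> i < m \<Longrightarrow> l < m \<Longrightarrow> eval_B (sandwich_word w i l) = b i * prod_list (map g w) * d l"
proof (induction w arbitrary: i)
  case Nil
  then show ?case
    by (simp add: fa_eval_var[OF \<phi>] gens_y x_or_one_def)
next
  case (Cons j w)
  then have "eval_B (sandwich_word (j # w) i l) = (\<Sum>t<m. b i * g j * d t * (b t * prod_list (map g w) * d l))"
    by (simp add: fa_eval_sum[OF \<phi>] fa_eval_mult[OF \<phi>] fa_eval_var[OF \<phi>] gens_y x_or_one_def)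
  then show ?case
    using sum_unit_insert[of "b i * g j" "prod_list (map g w) * d l"] by (simp add: mult.assoc)
qed

lemma eval_sandwich:
  assumes "p \<in> free_alg_n n" and "i < m" and "l < m"
  shows "eval_B (sandwich p i l) = b i * eval_A p * d l"
proof -
  have "eval_B (sandwich p i l)
      = (\<Sum>w\<in>Poly_Mapping.keys p. \<phi> (Poly_Mapping.lookup p w) * (b i * prod_list (map g (letters w)) * d l))"
    unfolding sandwich_def fa_eval_sum[OF \<phi>] fa_eval_mult[OF \<phi>] fa_eval_const[OF \<phi>]
    using assms free_alg_n_keys[OF assms(1)] by (intro sum.cong refl) (simp add: eval_sandwich_word)
  also have "\<dots> = (\<Sum>w\<in>Poly_Mapping.keys p. b i * (\<phi> (Poly_Mapping.lookup p w) * prod_list (map g (letters w))) * d l)"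
    by (simp only: mult.assoc[symmetric] k_algebra_commute[OF \<phi>, of _ "b i"])
  also have "\<dots> = b i * eval_A p * d l"
    by (simp add: fa_eval_def sum_distrib_left sum_distrib_right)
  finally show ?thesis .
qed

lemma eval_rels:
  assumes "r \<in> rels"
  shows "eval_B r = 0"
  using assms unfolding rels_def
proof (elim UnE imageE; clarify)
  note eval = fa_eval_diff[OF \<phi>] fa_eval_sum[OF \<phi>] fa_eval_mult[OF \<phi>] fa_eval_var[OF \<phi>]
    gens_y gens_z eval_sandwich eval_var_or_one lift
  have sum_unit_insert_right: "(\<Sum>t<m. u * d t * b t) = u" for u
    using sum_unit_insert[of u 1] by simp
  show "eval_B (sandwich r i l) = 0" if "r \<in> R" "i < m" "l < m" for r i l
  proof -
    have "r \<in> {p \<in> free_alg_n n. eval_A p = 0}"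
      using kernel fa_ideal_gen_generator[OF \<open>r \<in> R\<close>] by blast
    then show ?thesis
      using that by (simp add: eval)
  qed
  show "eval_B ((\<Sum>t<m. y n i t * y j t l) - y j i l) = 0" if "j \<le> n" "i < m" "l < m" for j i l
    using that sum_unit_insert[of "b i" "x_or_one j * d l"]
      by (simp add: eval mult.assoc x_or_one_def)
  show "eval_B (y j i l - (\<Sum>l'<m. sandwich (var_or_one j * lift (d l)) i l' * z l')) = 0"
    if "j \<le> n" "i < m" "l < m" for j i l
    using that sum_unit_insert_right[of "b i * (x_or_one j * d l)"]
      by (simp add: eval free_alg_n_mult var_or_one_in mult.assoc)
  show "eval_B (z l - (\<Sum>l'<m. sandwich 1 l l' * z l')) = 0" if "l < m" for l
    using that sum_unit_insert_right[of "b l"] by (simp add: eval fa_eval_one[OF \<phi>])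
  show "eval_B (\<Sum>i<m. sandwich (lift (rel j i)) i l) = 0" if "j < k" "l < m" for j l
    using that presentation
    by (simp add: eval sum_distrib_right[symmetric] right_ideal_presentation_def)
  show "eval_B (z l * y j i l' - sandwich (lift (b i) * var_or_one j) l l') = 0"
    if "j \<le> n" "i < m" "l < m" "l' < m" for j i l l'
    using that by (simp add: eval free_alg_n_mult var_or_one_in mult.assoc)
qed

definition K_plus_I :: "'a set" where
  "K_plus_I = {\<phi> c + x | c x. x \<in> I}"

definition represents :: "'a \<Rightarrow> 'k \<Rightarrow> (nat \<Rightarrow> 'k free_alg) \<Rightarrow> bool" where
  "represents v c q \<longleftrightarrow> (\<forall>i<m. q i \<in> free_alg_n n) \<and> v = \<phi> c + (\<Sum>i<m. b i * eval_A (q i))"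

definition representation :: "'a \<Rightarrow> 'k \<times> (nat \<Rightarrow> 'k free_alg)" where
  "representation v = (SOME cq. represents v (fst cq) (snd cq))"

definition normal_form_of :: "'a \<Rightarrow> 'k free_alg" where
  "normal_form_of v = normal_form (fst (representation v)) (snd (representation v))"

lemma mem_ideal_iff: "x \<in> I \<longleftrightarrow> (\<exists>a. x = (\<Sum>i<m. b i * a i))"
  using presentation unfolding right_ideal_presentation_def by blast

lemma lincomb_in_ideal: "(\<Sum>i<m. b i * a i) \<in> I"
  unfolding mem_ideal_iff by (rule exI) (rule refl)

lemma syzygy_exists: "(\<Sum>i<m. b i * a i) = 0 \<Longrightarrow> \<exists>e. \<forall>i<m. a i = (\<Sum>j<k. rel j i * e j)"
  using presentation unfolding right_ideal_presentation_def by blast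

lemma K_plus_I_intro: "x \<in> I \<Longrightarrow> \<phi> c + x \<in> K_plus_I"
  unfolding K_plus_I_def by blast

lemma represents_iff_K_plus_I: "(\<exists>c q. represents v c q) \<longleftrightarrow> v \<in> K_plus_I"
proof
  assume "\<exists>c q. represents v c q"
  then obtain c q where "v = \<phi> c + (\<Sum>i<m. b i * eval_A (q i))"
    unfolding represents_def by blast
  then show "v \<in> K_plus_I"
    by (simp add: K_plus_I_intro lincomb_in_ideal)
next
  assume "v \<in> K_plus_I"
  then obtain c a where "v = \<phi> c + (\<Sum>i<m. b i * a i)"
    unfolding K_plus_I_def mem_ideal_iff by blast
  then have "represents v c (\<lambda>i. lift (a i))"
    by (simp add: represents_def lift)
  then show "\<exists>c q. represents v c q"
    by blast
qed

lemma represents_representation: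
  assumes "v \<in> K_plus_I"
  shows "represents v (fst (representation v)) (snd (representation v))"
proof -
  obtain c q where "represents v c q"
    using assms represents_iff_K_plus_I by blast
  then show ?thesis
    using someI[of "\<lambda>cq. represents v (fst cq) (snd cq)" "(c, q)"] by (simp add: representation_def)
qed

lemma eval_normal_form:
  assumes "\<And>i. i < m \<Longrightarrow> q i \<in> free_alg_n n"
  shows "eval_B (normal_form c q) = \<phi> c + (\<Sum>i<m. b i * eval_A (q i))"
proof -
  have "eval_B (normal_form c q) = \<phi> c + (\<Sum>i<m. \<Sum>l<m. b i * eval_A (q i) * d l * b l)"
    using assms by (simp add: normal_form_def ideal_part_def fa_eval_add[OF \<phi>] fa_eval_sum[OF \<phi>]
        fa_eval_mult[OF \<phi>] fa_eval_const[OF \<phi>] fa_eval_var[OF \<phi>] gens_z eval_sandwich)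
  moreover have "(\<Sum>l<m. u * d l * b l) = u" for u
    using sum_unit_insert[of u 1] by simp
  ultimately show ?thesis
    by simp
qed

lemma const_in_ideal: "\<phi> c \<in> I \<Longrightarrow> c = 0"
proof (rule ccontr)
  assume "\<phi> c \<in> I" and "c \<noteq> 0"
  then have "\<phi> c * \<phi> (inverse c) \<in> I"
    using right_ideal by (simp add: right_ideal_def)
  then show False
    using \<open>c \<noteq> 0\<close> one_notin by (simp add: k_algebra_one[OF \<phi>] flip: k_algebra_mult[OF \<phi>])
qed

text \<open>The constant part of a representation is unique because \<open>1 \<notin> I\<close>; the ideal
  part is unique up to a syzygy of the generators \<open>b i\<close>.\<close>

lemma represents_unique:
  assumes rep: "represents v c q" and rep': "represents v c' q'"
  shows "rcong (normal_form c q) (normal_form c' q')"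
proof -
  have q: "\<And>i. i < m \<Longrightarrow> q i \<in> free_alg_n n" and q': "\<And>i. i < m \<Longrightarrow> q' i \<in> free_alg_n n"
    using rep rep' by (auto simp: represents_def)
  have eq: "\<phi> c - \<phi> c' = (\<Sum>i<m. b i * (eval_A (q' i) - eval_A (q i)))"
    using rep rep' by (simp add: represents_def right_diff_distrib sum_subtractf algebra_simps)
  have "\<phi> (c - c') \<in> I"
    unfolding mem_ideal_iff k_algebra_diff[OF \<phi>] eq
    by (rule exI[of _ "\<lambda>i. eval_A (q' i) - eval_A (q i)"]) (rule refl)
  then have c: "c = c'"
    using const_in_ideal by fastforce
  then have "(\<Sum>i<m. b i * eval_A (q i - q' i)) = 0"
    using eq by (simp add: fa_eval_diff[OF \<phi>] right_diff_distrib sum_subtractf)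
  then obtain e where e: "\<forall>i<m. eval_A (q i - q' i) = (\<Sum>j<k. rel j i * e j)"
    using syzygy_exists[of "\<lambda>i. eval_A (q i - q' i)"] by blast
  have "q i - q' i - (\<Sum>j<k. lift (rel j i) * lift (e j)) \<in> fa_ideal_gen n R" if "i < m" for i
  proof -
    have "eval_A (q i - q' i - (\<Sum>j<k. lift (rel j i) * lift (e j))) = 0"
      using e that by (simp add: fa_eval_diff[OF \<phi>] fa_eval_sum[OF \<phi>] fa_eval_mult[OF \<phi>] lift)
    moreover have "q i - q' i - (\<Sum>j<k. lift (rel j i) * lift (e j)) \<in> free_alg_n n"
      using q q' that lift by (intro free_alg_n_diff free_alg_n_sum free_alg_n_mult) auto
    ultimately show ?thesis
      using kernel by blast
  qed
  then have "rcong (ideal_part (\<lambda>i. q i - q' i)) 0"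
    using q q' lift by (intro ideal_part_syzygy[where c = "\<lambda>j. lift (e j)"]) auto
  moreover have "normal_form c q \<in> free_alg_n num_gens" "normal_form c' q' \<in> free_alg_n num_gens"
    using q q' by auto
  ultimately show ?thesis
    using c by (simp add: fa_cong_def ideal_part_diff normal_form_def)
qed

lemma normal_form_of_rcong: "represents v c q \<Longrightarrow> rcong (normal_form_of v) (normal_form c q)"
  unfolding normal_form_of_def
  using represents_unique represents_representation represents_iff_K_plus_I by blast

lemma const_in_K_plus_I: "\<phi> c \<in> K_plus_I"
  using K_plus_I_intro[of 0 c] right_ideal by (simp add: right_ideal_def)

lemma gens_in_K_plus_I:
  assumes "t < num_gens"
  shows "gens t \<in> K_plus_I"
proof -
  have "gens t \<in> I"
  proof (cases "t < Suc n * m * m")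
    case True
    then obtain j i l where "j \<le> n" "i < m" "l < m" "t = y_idx j i l"
      by (rule y_idx_decode)
    then have "i < m" "gens t = b i * (x_or_one j * d l)"
      by (simp_all add: gens_y mult.assoc)
    then show ?thesis
      using right_ideal right_ideal_presentation_generator[OF presentation]
        by (simp add: right_ideal_def)
  next
    case False
    then show ?thesis
      using assms right_ideal_presentation_generator[OF presentation]
        by (simp add: gens_def num_gens_def)
  qed
  then show ?thesis
    using K_plus_I_intro[of _ 0] by (simp add: k_algebra_zero[OF \<phi>])
qed

lemma normal_form_of_add:
  assumes "u \<in> K_plus_I" and "v \<in> K_plus_I"
  shows "u + v \<in> K_plus_I \<and> rcong (normal_form_of (u + v)) (normal_form_of u + normal_form_of v)"
proof -
  obtain c q c' q' where rep: "represents u c q" and rep': "represents v c' q'"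
    using assms represents_iff_K_plus_I by blast
  then have "represents (u + v) (c + c') (\<lambda>i. q i + q' i)"
    by (auto simp: represents_def fa_eval_add[OF \<phi>] k_algebra_add[OF \<phi>] distrib_left sum.distrib add_ac)
  then have "u + v \<in> K_plus_I" "rcong (normal_form_of (u + v)) (normal_form c q + normal_form c' q')"
    using represents_iff_K_plus_I normal_form_of_rcong[of "u + v"]
      by (auto simp flip: normal_form_add)
  then show ?thesis
    using fa_cong_sym[OF fa_cong_add[OF normal_form_of_rcong[OF rep] normal_form_of_rcong[OF rep']]]
    by (auto intro: fa_cong_trans)
qed

lemma normal_form_of_mult:
  assumes "u \<in> K_plus_I" and "v \<in> K_plus_I"
  shows "u * v \<in> K_plus_I \<and> rcong (normal_form_of (u * v)) (normal_form_of u * normal_form_of v)"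
proof -
  obtain c q c' q' where rep: "represents u c q" and rep': "represents v c' q'"
    using assms represents_iff_K_plus_I by blast
  then have q: "\<And>i. i < m \<Longrightarrow> q i \<in> free_alg_n n" and q': "\<And>i. i < m \<Longrightarrow> q' i \<in> free_alg_n n"
    by (auto simp: represents_def)
  define q'' where "q'' i = q i * fa_const c' + fa_const c * q' i + q i * (\<Sum>i'<m. lift (b i') * q' i')" for i
  have "u * v = \<phi> c * \<phi> c' + (\<Sum>i<m. b i * (eval_A (q i) * \<phi> c' + \<phi> c * eval_A (q' i)
      + eval_A (q i) * (\<Sum>i'<m. b i' * eval_A (q' i'))))"
    using rep rep' unfolding represents_def
    by (simp only:) (rule mult_central_plus_lincomb, rule k_algebra_commute[OF \<phi>])
  then have "represents (u * v) (c * c') q''"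
    using q q' lift by (auto simp: represents_def q''_def fa_eval_add[OF \<phi>] fa_eval_mult[OF \<phi>]
        fa_eval_const[OF \<phi>] fa_eval_sum[OF \<phi>] k_algebra_mult[OF \<phi>]
        intro!: free_alg_n_add free_alg_n_mult free_alg_n_sum)
  then have "u * v \<in> K_plus_I" "rcong (normal_form_of (u * v)) (normal_form (c * c') q'')"
    using represents_iff_K_plus_I normal_form_of_rcong by blast+
  moreover have "rcong (normal_form (c * c') q'') (normal_form_of u * normal_form_of v)"
    unfolding q''_def
    using fa_cong_sym[OF fa_cong_trans[OF fa_cong_mult[OF normal_form_of_rcong[OF rep]
          normal_form_of_rcong[OF rep']] normal_form_mult[OF q q']]] .
  ultimately show ?thesis
    using fa_cong_trans by blast
qed

lemma normal_form_of_const: "rcong (normal_form_of (\<phi> c)) (fa_const c)"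
proof -
  have "represents (\<phi> c) c (\<lambda>_. 0)"
    by (simp add: represents_def fa_eval_zero[OF \<phi>])
  then show ?thesis
    using normal_form_of_rcong by (fastforce simp: normal_form_def ideal_part_def)
qed

lemma normal_form_of_gens:
  assumes "t < num_gens"
  shows "rcong (normal_form_of (gens t)) (fa_var t)"
proof (cases "t < Suc n * m * m")
  case True
  then obtain j i l where jil: "j \<le> n" "i < m" "l < m" and t: "t = y_idx j i l"
    by (rule y_idx_decode)
  have "(\<Sum>i'<m. b i' * eval_A (if i' = i then var_or_one j * lift (d l) else 0)) = b i * (x_or_one j * d l)"
    by (simp add: if_distrib fa_eval_zero[OF \<phi>] fa_eval_mult[OF \<phi>] eval_var_or_one lift jil cong: if_cong)
  then have "represents (gens t) 0 (\<lambda>i'. if i' = i then var_or_one j * lift (d l) else 0)"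
    using jil lift by (auto simp: represents_def t gens_y k_algebra_zero[OF \<phi>] mult.assoc)
  then show ?thesis
    unfolding t using fa_cong_trans[OF normal_form_of_rcong normal_form_y[OF jil]] by blast
next
  case False
  define l where "l = t - Suc n * m * m"
  have l: "l < m" and t: "t = z_idx l"
    using assms False by (auto simp: l_def z_idx_def num_gens_def)
  have "represents (gens t) 0 (\<lambda>i. if i = l then 1 else 0)"
    using l by (simp add: represents_def t gens_z k_algebra_zero[OF \<phi>] if_distrib fa_eval_zero[OF \<phi>]
        fa_eval_one[OF \<phi>] cong: if_cong)
  then show ?thesis
    unfolding t using fa_cong_trans[OF normal_form_of_rcong normal_form_z[OF l]] by blast
qed

lemma eval_normal_form_of: "v \<in> K_plus_I \<Longrightarrow> eval_B (normal_form_of v) = v"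
  using represents_representation[of v] eval_normal_form
  by (simp add: normal_form_of_def represents_def)

theorem fp_algebra_K_plus_I: "fp_algebra \<phi> K_plus_I"
proof (rule fp_algebra_by_section[OF \<phi>, where s = normal_form_of])
  fix u v assume "u \<in> K_plus_I" and "v \<in> K_plus_I"
  then show "u + v \<in> K_plus_I" "rcong (normal_form_of (u + v)) (normal_form_of u + normal_form_of v)"
    and "u * v \<in> K_plus_I" "rcong (normal_form_of (u * v)) (normal_form_of u * normal_form_of v)"
    using normal_form_of_add normal_form_of_mult by blast+
qed (use gens_in_K_plus_I const_in_K_plus_I normal_form_of_const normal_form_of_gens finite_rels
    rels_subset eval_rels eval_normal_form_of in auto)

end

lemma K_plus_ideal_eq_UNIV:
  assumes "k_algebra \<phi>" and "right_ideal I" and "1 \<in> I"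
  shows "{\<phi> c + x | c x. x \<in> I} = UNIV"
proof -
  have "y \<in> I" for y
    using assms(2,3) unfolding right_ideal_def by (metis mult_1)
  then have "\<phi> 0 + y \<in> {\<phi> c + x | c x. x \<in> I}" for y
    by blast
  then show ?thesis
    by (auto simp: k_algebra_zero[OF assms(1)])
qed

theorem theorem4p7:
  fixes \<phi> :: "'k::field \<Rightarrow> 'a::ring_1" and I :: "'a set"
  assumes "k_algebra \<phi>"
    and "fp_algebra \<phi> UNIV"
    and "right_ideal I"
    and "fp_right_ideal I"
    and "left_span I = UNIV"
  shows "fp_algebra \<phi> {\<phi> c + x | c x. x \<in> I}"
proof (cases "1 \<in> I")
  case True
  then show ?thesis
    using assms(2) K_plus_ideal_eq_UNIV[OF assms(1,3)] by simp
next
  case False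
  obtain n g R where "UNIV = fa_eval \<phi> g ` free_alg_n n" and "finite R" and "R \<subseteq> free_alg_n n"
    and "{p \<in> free_alg_n n. fa_eval \<phi> g p = 0} = fa_ideal_gen n R"
    using assms(2) unfolding fp_algebra_def by blast
  moreover obtain m b k rel d where "right_ideal_presentation I m b k rel" and "(\<Sum>l<m. d l * b l) = 1"
    using right_ideal_presentation_unit[OF assms(4,5)] .
  ultimately interpret K_plus_ideal \<phi> n g R I m k b rel d
    using assms(1,3) False by unfold_locales
  show ?thesis
    using fp_algebra_K_plus_I unfolding K_plus_I_def .
qed

end
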